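(* Let $n_A,n_B\ge1$, let $H\in\mathbb{C}^{(n_An_B)\times(n_An_B)}$ be the Hermitian payoff Hamiltonian of a zero-sum quantum game on $\mathbb{C}^{n_A}\otimes\mathbb{C}^{n_B}$ (player $A$ minimizes, player $B$ maximizes the payoff $\operatorname{tr}((\rho_A\otimes\rho_B)H)$), and let $\Delta\ge0$ be the deception budget. Consider the bilinear semidefinite program $$\min_{\rho_A,\Omega\in\mathbb{C}^{n_A\times n_A},\ \rho_B\in\mathbb{C}^{n_B\times n_B},\ D\in\mathbb{C}^{(n_An_B)\times(n_An_B)},\ u\in\mathbb{R}}\ \operatorname{tr}\big((\rho_A\otimes\rho_B)H\big)$$ subject to $\operatorname{tr}_B\big((I_A\otimes\rho_B)(H+D)\big)\succeq u\,I_A$, $\operatorname{tr}_A\big((\Omega\otimes I_B)(H+D)\big)\preceq u\,I_B$, $D=D^\dagger$, $\|D\|_1\le\Delta$, $\rho_A,\rho_B,\Omega\succeq0$, and $\operatorname{tr}(\rho_A)=\operatorname{tr}(\rho_B)=\operatorname{tr}(\Omega)=1$. If $(\rho_A^\star,D^\star,\rho_B^\star,\Omega^\star,u^\star)$ is an optimal solution of this program, then $(\rho_A^\star,D^\star,\rho_B^\star)$ is an optimal solution of the bilevel quantum deception problem $$\min_{\rho_A\in\mathcal{P}_A,\ \rho_B\in\mathcal{P}_B,\ D\in\mathcal{D}}\ \operatorname{tr}\big((\rho_A\otimes\rho_B)H\big)\quad\text{s.t.}\quad \rho_B\in\Phi_B(H+D).$$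
   Context: $\mathcal{P}_A$ (resp. $\mathcal{P}_B$) denotes the set of $n_A\times n_A$ (resp. $n_B\times n_B$) complex positive semidefinite matrices of trace one (density matrices). $\mathcal{D}=\{D\in\mathbb{C}^{(n_An_B)\times(n_An_B)}:D=D^\dagger,\ \|D\|_1\le\Delta\}$, where $\|A\|_1=\sup_{\|x\|_1=1}\|Ax\|_1$ is the matrix norm induced by the vector $1$-norm. For a Hermitian $H'$, $\Phi_B(H')=\operatorname*{arg\,max}_{\rho_B\in\mathcal{P}_B}\min_{\rho_A\in\mathcal{P}_A}\operatorname{tr}((\rho_A\otimes\rho_B)H')$ is the set of security policies of the maximizing player $B$ in the zero-sum game with payoff Hamiltonian $H'$. $\operatorname{tr}_A,\operatorname{tr}_B$ are the partial traces over the factors $\mathbb{C}^{n_A}$ and $\mathbb{C}^{n_B}$; $I_A=I_{n_A}$, $I_B=I_{n_B}$; $\succeq$ is the Loewner order. *)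

theory Defs
  imports "Jordan_Normal_Form.Schur_Decomposition"
begin

definition mtrace :: "complex mat \<Rightarrow> complex" where
  "mtrace A = (\<Sum>i<dim_row A. A $$ (i, i))"

definition hermitian_mat :: "nat \<Rightarrow> complex mat \<Rightarrow> bool" where
  "hermitian_mat n A \<longleftrightarrow> A \<in> carrier_mat n n \<and> mat_adjoint A = A"

definition psd_mat :: "nat \<Rightarrow> complex mat \<Rightarrow> bool" where
  "psd_mat n A \<longleftrightarrow> hermitian_mat n A \<and>
     (\<forall>v \<in> carrier_vec n. 0 \<le> Re (conjugate v \<bullet> (A *\<^sub>v v)))"

definition loewner_ge :: "nat \<Rightarrow> complex mat \<Rightarrow> complex mat \<Rightarrow> bool" where
  "loewner_ge n A B \<longleftrightarrow> A \<in> carrier_mat n n \<and> B \<in> carrier_mat n n \<and> psd_mat n (A - B)"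

definition density_mats :: "nat \<Rightarrow> complex mat set" where
  "density_mats n = {\<rho>. psd_mat n \<rho> \<and> mtrace \<rho> = 1}"

(* Kronecker (tensor) product; index of C^{nA} \<otimes> C^{nB}: (i,k) \<mapsto> i*nB + k *)
definition kron :: "complex mat \<Rightarrow> complex mat \<Rightarrow> complex mat" where
  "kron A B = mat (dim_row A * dim_row B) (dim_col A * dim_col B)
     (\<lambda>(i, j). A $$ (i div dim_row B, j div dim_col B) * B $$ (i mod dim_row B, j mod dim_col B))"

definition ptrace_B :: "nat \<Rightarrow> nat \<Rightarrow> complex mat \<Rightarrow> complex mat" where
  "ptrace_B nA nB M = mat nA nA (\<lambda>(i, j). \<Sum>k<nB. M $$ (i * nB + k, j * nB + k))"

definition ptrace_A :: "nat \<Rightarrow> nat \<Rightarrow> complex mat \<Rightarrow> complex mat" where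
  "ptrace_A nA nB M = mat nB nB (\<lambda>(i, j). \<Sum>k<nA. M $$ (k * nB + i, k * nB + j))"

definition vec_norm1 :: "complex vec \<Rightarrow> real" where
  "vec_norm1 v = (\<Sum>i<dim_vec v. cmod (v $ i))"

definition mat_norm1 :: "complex mat \<Rightarrow> real" where
  "mat_norm1 A = Sup {vec_norm1 (A *\<^sub>v x) | x. x \<in> carrier_vec (dim_col A) \<and> vec_norm1 x = 1}"

definition deception_set :: "nat \<Rightarrow> real \<Rightarrow> complex mat set" where
  "deception_set n \<Delta> = {D. hermitian_mat n D \<and> mat_norm1 D \<le> \<Delta>}"

(* payoff tr((\<rho>A \<otimes> \<rho>B) H) (real for Hermitian arguments; we take the real part) *)
definition payoff :: "complex mat \<Rightarrow> complex mat \<Rightarrow> complex mat \<Rightarrow> real" where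
  "payoff H \<rho>A \<rho>B = Re (mtrace (kron \<rho>A \<rho>B * H))"

definition sec_value_B :: "nat \<Rightarrow> complex mat \<Rightarrow> complex mat \<Rightarrow> real" where
  "sec_value_B nA H \<rho>B = Inf {payoff H \<rho>A \<rho>B | \<rho>A. \<rho>A \<in> density_mats nA}"

definition Phi_B :: "nat \<Rightarrow> nat \<Rightarrow> complex mat \<Rightarrow> complex mat set" where
  "Phi_B nA nB H = {\<rho>B. \<rho>B \<in> density_mats nB \<and>
      (\<forall>\<sigma> \<in> density_mats nB. sec_value_B nA H \<sigma> \<le> sec_value_B nA H \<rho>B)}"

definition bilevel_feasible :: "nat \<Rightarrow> nat \<Rightarrow> complex mat \<Rightarrow> real \<Rightarrow>
    complex mat \<Rightarrow> complex mat \<Rightarrow> complex mat \<Rightarrow> bool" where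
  "bilevel_feasible nA nB H \<Delta> \<rho>A D \<rho>B \<longleftrightarrow>
     \<rho>A \<in> density_mats nA \<and> \<rho>B \<in> density_mats nB \<and> D \<in> deception_set (nA * nB) \<Delta> \<and>
     \<rho>B \<in> Phi_B nA nB (H + D)"

definition bilevel_optimal :: "nat \<Rightarrow> nat \<Rightarrow> complex mat \<Rightarrow> real \<Rightarrow>
    complex mat \<Rightarrow> complex mat \<Rightarrow> complex mat \<Rightarrow> bool" where
  "bilevel_optimal nA nB H \<Delta> \<rho>A D \<rho>B \<longleftrightarrow>
     bilevel_feasible nA nB H \<Delta> \<rho>A D \<rho>B \<and>
     (\<forall>\<rho>A' D' \<rho>B'. bilevel_feasible nA nB H \<Delta> \<rho>A' D' \<rho>B' \<longrightarrow>
        payoff H \<rho>A \<rho>B \<le> payoff H \<rho>A' \<rho>B')"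

definition sdp_feasible :: "nat \<Rightarrow> nat \<Rightarrow> complex mat \<Rightarrow> real \<Rightarrow>
    complex mat \<Rightarrow> complex mat \<Rightarrow> complex mat \<Rightarrow> complex mat \<Rightarrow> real \<Rightarrow> bool" where
  "sdp_feasible nA nB H \<Delta> \<rho>A D \<rho>B \<Omega> u \<longleftrightarrow>
     loewner_ge nA (ptrace_B nA nB (kron (1\<^sub>m nA) \<rho>B * (H + D))) (complex_of_real u \<cdot>\<^sub>m 1\<^sub>m nA) \<and>
     loewner_ge nB (complex_of_real u \<cdot>\<^sub>m 1\<^sub>m nB) (ptrace_A nA nB (kron \<Omega> (1\<^sub>m nB) * (H + D))) \<and>
     hermitian_mat (nA * nB) D \<and> mat_norm1 D \<le> \<Delta> \<and>
     psd_mat nA \<rho>A \<and> psd_mat nB \<rho>B \<and> psd_mat nA \<Omega> \<and>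
     mtrace \<rho>A = 1 \<and> mtrace \<rho>B = 1 \<and> mtrace \<Omega> = 1"

definition sdp_optimal :: "nat \<Rightarrow> nat \<Rightarrow> complex mat \<Rightarrow> real \<Rightarrow>
    complex mat \<Rightarrow> complex mat \<Rightarrow> complex mat \<Rightarrow> complex mat \<Rightarrow> real \<Rightarrow> bool" where
  "sdp_optimal nA nB H \<Delta> \<rho>A D \<rho>B \<Omega> u \<longleftrightarrow>
     sdp_feasible nA nB H \<Delta> \<rho>A D \<rho>B \<Omega> u \<and>
     (\<forall>\<rho>A' D' \<rho>B' \<Omega>' u'. sdp_feasible nA nB H \<Delta> \<rho>A' D' \<rho>B' \<Omega>' u' \<longrightarrow>
        payoff H \<rho>A \<rho>B \<le> payoff H \<rho>A' \<rho>B')"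

end

theory Submission
  imports Defs "HOL-Analysis.Function_Topology" "HOL-Analysis.Elementary_Metric_Spaces" "HOL-Analysis.Convex"
begin

(* For Hermitian G = H + D, membership of rho_B in Phi_B(G) is exactly what the SDP constraints
   express. Tested on pure states, the first constraint says that every rho_A pays at least u against
   rho_B, i.e. u <= sec(rho_B); the second says that Omega holds every sigma to payoff at most u,
   whence sec(sigma) <= u <= sec(rho_B). Conversely, if rho_B is a security policy of value v, the
   minimax theorem supplies an Omega holding B to v. It is proved by projection: minimise the
   Frobenius norm of the residual tr_A((Omega x I) G) - v I + P over density matrices Omega and PSD P.
   At a minimiser the residual S is PSD and orthogonal to P, and if S were nonzero then S / tr S
   would be a strategy of B with security value above v. So an optimal SDP solution is bilevel
   feasible, and every bilevel-feasible point extends to an SDP-feasible one with the same payoff. *)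

section \<open>Positive semidefinite matrices\<close>

lemma hermitian_mat_iff_entries:
  "hermitian_mat n A \<longleftrightarrow> A \<in> carrier_mat n n \<and> (\<forall>i<n. \<forall>j<n. cnj (A $$ (i, j)) = A $$ (j, i))"
proof (cases "A \<in> carrier_mat n n")
  case True
  then have "mat_adjoint A $$ (i, j) = cnj (A $$ (j, i))" if "i < n" "j < n" for i j
    using that unfolding mat_adjoint_def by (simp add: mat_of_rows_def)
  moreover have "mat_adjoint A \<in> carrier_mat n n"
    using True unfolding mat_adjoint_def mat_of_rows_def by auto
  ultimately show ?thesis
    using True unfolding hermitian_mat_def by (auto simp: mat_eq_iff)
qed (simp add: hermitian_mat_def)

definition quad_form :: "nat \<Rightarrow> (nat \<Rightarrow> nat \<Rightarrow> complex) \<Rightarrow> (nat \<Rightarrow> complex) \<Rightarrow> complex" where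
  "quad_form n a w = (\<Sum>i<n. \<Sum>j<n. cnj (w i) * a i j * w j)"

definition psd_fun :: "nat \<Rightarrow> (nat \<Rightarrow> nat \<Rightarrow> complex) \<Rightarrow> bool" where
  "psd_fun n a \<longleftrightarrow> (\<forall>i<n. \<forall>j<n. cnj (a i j) = a j i) \<and> (\<forall>w. 0 \<le> Re (quad_form n a w))"

lemma quad_form_cong:
  "(\<And>i j. i < n \<Longrightarrow> j < n \<Longrightarrow> a i j = b i j) \<Longrightarrow> (\<And>i. i < n \<Longrightarrow> w i = x i)
    \<Longrightarrow> quad_form n a w = quad_form n b x"
  unfolding quad_form_def by (intro sum.cong) auto

lemma scalar_prod_mult_mat_vec_eq_quad_form:
  assumes "A \<in> carrier_mat n n" "v \<in> carrier_vec n"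
  shows "scalar_prod (conjugate v) (A *\<^sub>v v) = quad_form n (\<lambda>i j. A $$ (i, j)) (\<lambda>i. v $ i)"
  using assms
  by (simp add: quad_form_def scalar_prod_def mult_mat_vec_def sum_distrib_left mult.assoc lessThan_atLeast0)

lemma psd_mat_iff_psd_fun:
  "psd_mat n A \<longleftrightarrow> A \<in> carrier_mat n n \<and> psd_fun n (\<lambda>i j. A $$ (i, j))"
proof (cases "A \<in> carrier_mat n n")
  case A: True
  have "(\<forall>v \<in> carrier_vec n. 0 \<le> Re (scalar_prod (conjugate v) (A *\<^sub>v v)))
      \<longleftrightarrow> (\<forall>w. 0 \<le> Re (quad_form n (\<lambda>i j. A $$ (i, j)) w))"
  proof safe
    fix w assume "\<forall>v \<in> carrier_vec n. 0 \<le> Re (scalar_prod (conjugate v) (A *\<^sub>v v))"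
    then have "0 \<le> Re (scalar_prod (conjugate (vec n w)) (A *\<^sub>v vec n w))" by simp
    then have "0 \<le> Re (quad_form n (\<lambda>i j. A $$ (i, j)) (\<lambda>i. vec n w $ i))"
      by (simp add: scalar_prod_mult_mat_vec_eq_quad_form[OF A])
    also have "quad_form n (\<lambda>i j. A $$ (i, j)) (\<lambda>i. vec n w $ i) = quad_form n (\<lambda>i j. A $$ (i, j)) w"
      by (rule quad_form_cong) auto
    finally show "0 \<le> Re (quad_form n (\<lambda>i j. A $$ (i, j)) w)" .
  qed (simp add: scalar_prod_mult_mat_vec_eq_quad_form[OF A])
  then show ?thesis
    using A unfolding psd_mat_def psd_fun_def hermitian_mat_iff_entries by blast
qed (simp add: psd_mat_def hermitian_mat_def)

lemma quad_form_supported: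
  assumes "S \<subseteq> {..<n}" and "\<And>i. i \<notin> S \<Longrightarrow> w i = 0"
  shows "quad_form n a w = (\<Sum>i\<in>S. \<Sum>j\<in>S. cnj (w i) * a i j * w j)"
  unfolding quad_form_def using assms finite_subset[OF assms(1)]
  by (intro sum.mono_neutral_cong_right) (auto intro!: sum.neutral)

lemma quad_form_unit:
  assumes "k < n"
  shows "quad_form n a (\<lambda>i. if i = k then 1 else 0) = a k k"
  using assms by (subst quad_form_supported[of "{k}"]) auto

lemma quad_form_two_points:
  assumes "k < n" "j < n" "k \<noteq> j"
  shows "quad_form n a (\<lambda>i. if i = k then s else if i = j then 1 else 0)
       = cnj s * a k k * s + cnj s * a k j + a j k * s + a j j"
  using assms by (subst quad_form_supported[of "{k, j}"]) auto

lemma psd_fun_diag: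
  assumes "psd_fun n a" "k < n"
  shows "a k k = of_real (Re (a k k))" and "0 \<le> Re (a k k)"
proof -
  have "cnj (a k k) = a k k" using assms unfolding psd_fun_def by blast
  then have "Im (a k k) = - Im (a k k)" by (metis cnj.sel(2))
  then have "Im (a k k) = 0" by simp
  then show "a k k = of_real (Re (a k k))" by (simp add: complex_eq_iff)
  have "0 \<le> Re (quad_form n a (\<lambda>i. if i = k then 1 else 0))"
    using assms(1) unfolding psd_fun_def by blast
  then show "0 \<le> Re (a k k)" by (simp add: quad_form_unit[OF assms(2)])
qed

lemma psd_fun_two_points:
  assumes "psd_fun n a" "k < n" "j < n" "k \<noteq> j"
  shows "0 \<le> (cmod s)\<^sup>2 * Re (a k k) + 2 * Re (cnj s * a k j) + Re (a j j)"
proof -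
  have "Re (a j k * s) = Re (cnj s * a k j)"
    using assms unfolding psd_fun_def by (metis cnj.sel(1) complex_cnj_mult mult.commute)
  moreover have "cnj s * a k k * s = of_real ((cmod s)\<^sup>2) * a k k"
    unfolding complex_norm_square by (simp add: mult.commute mult.left_commute)
  then have "Re (cnj s * a k k * s) = (cmod s)\<^sup>2 * Re (a k k)"
    by (simp only:) simp
  moreover have "0 \<le> Re (quad_form n a (\<lambda>i. if i = k then s else if i = j then 1 else 0))"
    using assms unfolding psd_fun_def by blast
  ultimately show ?thesis unfolding quad_form_two_points[OF assms(2-4)] plus_complex.sel(1) by linarith
qed

lemma psd_fun_entry_bound:
  assumes "psd_fun n a" "k < n" "j < n"
  shows "cmod (a k j) \<le> (Re (a k k) + Re (a j j)) / 2"
proof (cases "k = j")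
  case True
  have "cmod (a k k) = Re (a k k)" using psd_fun_diag[OF assms(1,2)] by (metis abs_of_nonneg norm_of_real)
  then show ?thesis using True by simp
next
  case False
  show ?thesis
  proof (cases "a k j = 0")
    case True
    then show ?thesis using psd_fun_diag(2)[OF assms(1,2)] psd_fun_diag(2)[OF assms(1,3)] by simp
  next
    case nz: False
    define s where "s = - a k j / of_real (cmod (a k j))"
    have "cnj (a k j) * a k j = of_real ((cmod (a k j))\<^sup>2)"
      by (metis complex_norm_square mult.commute)
    then have "cnj s * a k j = - of_real (cmod (a k j))"
      using nz unfolding s_def by (simp add: power2_eq_square)
    moreover have "cmod s = 1" using nz unfolding s_def by (simp add: norm_divide)
    ultimately show ?thesis using psd_fun_two_points[OF assms False, of s] by simp
  qed
qed

lemma psd_fun_zero_diag: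
  assumes "psd_fun n a" "k < n" "j < n" "Re (a k k) = 0"
  shows "a k j = 0"
proof (rule ccontr)
  assume nz: "a k j \<noteq> 0"
  then have "k \<noteq> j" using psd_fun_diag(1)[OF assms(1,2)] assms(4) by auto
  define c where "c = (cmod (a k j))\<^sup>2"
  have c: "c > 0" using nz unfolding c_def by simp
  define x where "x = (Re (a j j) + 1) / (2 * c)"
  have "cnj (- of_real x * a k j) * a k j = - of_real x * (cnj (a k j) * a k j)" by simp
  also have "cnj (a k j) * a k j = of_real c" unfolding c_def by (metis complex_norm_square mult.commute)
  finally have "2 * Re (cnj (- of_real x * a k j) * a k j) = - (Re (a j j) + 1)"
    unfolding x_def using c by (simp add: field_simps)
  then show False using psd_fun_two_points[OF assms(1-3) \<open>k \<noteq> j\<close>, of "- of_real x * a k j"] assms(4) by simp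
qed

lemma quad_form_shift_unit:
  assumes "k < n"
  shows "quad_form n a (\<lambda>i. w i - (if i = k then t else 0))
       = quad_form n a w - cnj t * (\<Sum>j<n. a k j * w j) - t * (\<Sum>i<n. cnj (w i) * a i k) + cnj t * t * a k k"
proof -
  have if_sum_const: "\<And>P f. (\<Sum>j<n. if P then f j else 0) = (if P then \<Sum>j<n. f j else 0)"
    by simp
  have "cnj (w i - (if i = k then t else 0)) * a i j * (w j - (if j = k then t else 0))
     = cnj (w i) * a i j * w j - (if i = k then cnj t * (a k j * w j) else 0)
       - (if j = k then t * (cnj (w i) * a i k) else 0)
       + (if i = k then (if j = k then cnj t * t * a k k else 0) else 0)" for i j
    by (auto simp: algebra_simps)
  then show ?thesis
    unfolding quad_form_def using assms
    by (simp add: sum.distrib sum_subtractf sum_distrib_left if_sum_const)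
qed

lemma psd_fun_schur_complement:
  assumes "psd_fun n a" "k < n" "a k k \<noteq> 0"
  shows "psd_fun n (\<lambda>i j. a i j - a i k * a k j / a k k)"
proof -
  have herm: "\<And>i j. i < n \<Longrightarrow> j < n \<Longrightarrow> cnj (a i j) = a j i" using assms(1) unfolding psd_fun_def by blast
  have "0 \<le> Re (quad_form n (\<lambda>i j. a i j - a i k * a k j / a k k) w)" for w
  proof -
    define \<gamma> where "\<gamma> = (\<Sum>j<n. a k j * w j)"
    define \<beta> where "\<beta> = (\<Sum>i<n. cnj (w i) * a i k)"
    have "cnj \<beta> = \<gamma>" unfolding \<beta>_def \<gamma>_def using herm assms(2) by (auto intro!: sum.cong simp: mult.commute)
    then have "cnj (\<gamma> / a k k) = \<beta> / a k k"
      using herm[OF assms(2) assms(2)] by (metis complex_cnj_cnj complex_cnj_divide)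
    then have "quad_form n a (\<lambda>i. w i - (if i = k then \<gamma> / a k k else 0)) = quad_form n a w - \<beta> * \<gamma> / a k k"
      unfolding quad_form_shift_unit[OF assms(2)] \<gamma>_def[symmetric] \<beta>_def[symmetric] using assms(3)
      by (simp add: field_simps)
    also have "\<dots> = quad_form n (\<lambda>i j. a i j - a i k * a k j / a k k) w"
      unfolding quad_form_def \<beta>_def \<gamma>_def
      by (simp add: algebra_simps sum_subtractf sum_distrib_left sum_distrib_right sum_divide_distrib)
    finally show ?thesis using assms(1) unfolding psd_fun_def by metis
  qed
  moreover have "cnj (a i j - a i k * a k j / a k k) = a j i - a j k * a k i / a k k" if "i < n" "j < n" for i j
    using herm[OF that] herm[OF that(1) assms(2)] herm[OF assms(2) that(2)] herm[OF assms(2) assms(2)]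
    by (simp add: mult.commute)
  ultimately show ?thesis unfolding psd_fun_def by blast
qed

lemma trace_mult_schur_complement:
  assumes "psd_fun n a" "k < n"
  shows "(\<Sum>i<n. \<Sum>j<n. a i j * b j i)
       = (\<Sum>i<n. \<Sum>j<n. (a i j - a i k * a k j / a k k) * b j i) + quad_form n b (\<lambda>i. a i k) / a k k"
proof -
  have "(\<Sum>i<n. \<Sum>j<n. a i j * b j i)
      = (\<Sum>i<n. \<Sum>j<n. (a i j - a i k * a k j / a k k) * b j i) + (\<Sum>i<n. \<Sum>j<n. a i k * a k j * b j i) / a k k"
    by (simp add: algebra_simps sum_subtractf sum.distrib sum_divide_distrib)
  also have "(\<Sum>i<n. \<Sum>j<n. a i k * a k j * b j i) = quad_form n b (\<lambda>i. a i k)"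
    using assms unfolding quad_form_def psd_fun_def
    by (subst sum.swap) (auto intro!: sum.cong simp: mult.commute mult.left_commute)
  finally show ?thesis .
qed

lemma psd_fun_trace_mult_nonneg:
  assumes "psd_fun n a" "psd_fun n b"
  shows "0 \<le> Re (\<Sum>i<n. \<Sum>j<n. a i j * b j i)"
proof -
  (* Induction on the number d of leading rows and columns of a that vanish: the Schur complement
     at the pivot a d d vanishes on one more of them and splits off a quadratic form of b. *)
  have "0 \<le> Re (\<Sum>i<n. \<Sum>j<n. a i j * b j i)"
    if "d \<le> n" "psd_fun n a" "\<And>i j. i < n \<Longrightarrow> j < n \<Longrightarrow> i < d \<or> j < d \<Longrightarrow> a i j = 0" for a d
    using that
  proof (induction d arbitrary: a rule: inc_induct)
    case base
    then show ?case by (simp add: sum.neutral)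
  next
    case (step d)
    have herm: "\<And>i j. i < n \<Longrightarrow> j < n \<Longrightarrow> cnj (a i j) = a j i" using step.prems(1) unfolding psd_fun_def by blast
    show ?case
    proof (cases "a d d = 0")
      case True
      have "a d j = 0" if "j < n" for j
        using psd_fun_zero_diag[OF step.prems(1) step.hyps(2) that] True by simp
      moreover have "a j d = 0" if "j < n" for j
        using herm[OF step.hyps(2) that] \<open>j < n \<Longrightarrow> a d j = 0\<close> that by force
      ultimately show ?thesis
        using step.IH[OF step.prems(1)] step.prems(2) by (metis less_SucE)
    next
      case False
      let ?a' = "\<lambda>i j. a i j - a i d * a d j / a d d"
      have "?a' i j = 0" if "i < n" "j < n" "i < Suc d \<or> j < Suc d" for i j
        using that step.prems(2)[of i j] step.prems(2)[of i d] step.prems(2)[of d j] step.hyps(2) False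
        by (auto simp: less_Suc_eq)
      then have "0 \<le> Re (\<Sum>i<n. \<Sum>j<n. ?a' i j * b j i)"
        using step.IH psd_fun_schur_complement[OF step.prems(1) step.hyps(2) False] by blast
      moreover have "0 \<le> Re (quad_form n b (\<lambda>i. a i d)) / Re (a d d)"
        using assms(2) psd_fun_diag(2)[OF step.prems(1) step.hyps(2)] unfolding psd_fun_def by simp
      ultimately show ?thesis
        unfolding trace_mult_schur_complement[OF step.prems(1) step.hyps(2)]
        by (subst psd_fun_diag(1)[OF step.prems(1) step.hyps(2)]) simp
    qed
  qed
  then show ?thesis using assms(1) by blast
qed

lemma index_mult_mat_sum:
  assumes "A \<in> carrier_mat p q" "B \<in> carrier_mat q r" "i < p" "j < r"
  shows "(A * B) $$ (i, j) = (\<Sum>l<q. A $$ (i, l) * B $$ (l, j))"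
  using assms by (auto simp: scalar_prod_def lessThan_atLeast0 intro!: sum.cong)

lemma mtrace_mult:
  assumes "A \<in> carrier_mat n q" "B \<in> carrier_mat q n"
  shows "mtrace (A * B) = (\<Sum>i<n. \<Sum>j<q. A $$ (i, j) * B $$ (j, i))"
proof -
  have "(A * B) $$ (i, i) = (\<Sum>j<q. A $$ (i, j) * B $$ (j, i))" if "i < n" for i
    using index_mult_mat_sum[OF assms that that] .
  then show ?thesis unfolding mtrace_def using assms by simp
qed

lemma mtrace_mult_commute:
  assumes "A \<in> carrier_mat n q" "B \<in> carrier_mat q n"
  shows "mtrace (A * B) = mtrace (B * A)"
  unfolding mtrace_mult[OF assms] mtrace_mult[OF assms(2,1)] by (subst sum.swap) (simp add: mult.commute)

lemma mtrace_smult: "A \<in> carrier_mat n n \<Longrightarrow> mtrace (c \<cdot>\<^sub>m A) = c * mtrace A"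
  by (simp add: mtrace_def sum_distrib_left)

lemma psd_mat_trace_mult_nonneg:
  assumes "psd_mat n A" "psd_mat n B"
  shows "0 \<le> Re (mtrace (A * B))"
  using assms psd_fun_trace_mult_nonneg[of n "\<lambda>i j. A $$ (i, j)" "\<lambda>i j. B $$ (i, j)"]
    mtrace_mult[of A n n B]
  by (simp add: psd_mat_iff_psd_fun)

lemma hermitian_mat_add:
  "hermitian_mat n A \<Longrightarrow> hermitian_mat n B \<Longrightarrow> hermitian_mat n (A + B)"
  unfolding hermitian_mat_iff_entries by auto

lemma hermitian_mat_diff_scalar:
  assumes "hermitian_mat n X"
  shows "hermitian_mat n (X - of_real c \<cdot>\<^sub>m 1\<^sub>m n)" and "hermitian_mat n (of_real c \<cdot>\<^sub>m 1\<^sub>m n - X)"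
  using assms unfolding hermitian_mat_iff_entries by auto

lemma mtrace_mult_diff_scalar:
  assumes "\<rho> \<in> carrier_mat n n" "X \<in> carrier_mat n n"
  shows "mtrace (\<rho> * (X - of_real c \<cdot>\<^sub>m 1\<^sub>m n)) = mtrace (\<rho> * X) - of_real c * mtrace \<rho>"
    and "mtrace (\<rho> * (of_real c \<cdot>\<^sub>m 1\<^sub>m n - X)) = of_real c * mtrace \<rho> - mtrace (\<rho> * X)"
proof -
  have "mtrace (\<rho> * (X - of_real c \<cdot>\<^sub>m 1\<^sub>m n))
      = (\<Sum>i<n. \<Sum>j<n. \<rho> $$ (i, j) * X $$ (j, i) - (if j = i then of_real c * \<rho> $$ (i, i) else 0))"
    using assms by (subst mtrace_mult[OF assms(1)]) (auto simp: algebra_simps intro!: sum.cong)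
  then show "mtrace (\<rho> * (X - of_real c \<cdot>\<^sub>m 1\<^sub>m n)) = mtrace (\<rho> * X) - of_real c * mtrace \<rho>"
    using assms by (simp add: mtrace_mult[OF assms] sum_subtractf mtrace_def[of \<rho>] sum_distrib_left)
  have "mtrace (\<rho> * (of_real c \<cdot>\<^sub>m 1\<^sub>m n - X))
      = (\<Sum>i<n. \<Sum>j<n. (if j = i then of_real c * \<rho> $$ (i, i) else 0) - \<rho> $$ (i, j) * X $$ (j, i))"
    using assms by (subst mtrace_mult[OF assms(1)]) (auto simp: algebra_simps intro!: sum.cong)
  then show "mtrace (\<rho> * (of_real c \<cdot>\<^sub>m 1\<^sub>m n - X)) = of_real c * mtrace \<rho> - mtrace (\<rho> * X)"
    using assms by (simp add: mtrace_mult[OF assms] sum_subtractf mtrace_def[of \<rho>] sum_distrib_left)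
qed

lemma quad_form_add:
  "quad_form n (\<lambda>i j. a i j + b i j) w = quad_form n a w + quad_form n b w"
  unfolding quad_form_def by (simp add: algebra_simps sum.distrib)

lemma quad_form_scale:
  "quad_form n (\<lambda>i j. c * a i j) w = c * quad_form n a w"
  unfolding quad_form_def by (simp add: sum_distrib_left mult_ac)

lemma psd_mat_add: "psd_mat n A \<Longrightarrow> psd_mat n B \<Longrightarrow> psd_mat n (A + B)"
  unfolding psd_mat_iff_psd_fun psd_fun_def
  by (auto simp: quad_form_cong[of n "\<lambda>i j. (A + B) $$ (i, j)" "\<lambda>i j. A $$ (i, j) + B $$ (i, j)"] quad_form_add)

lemma psd_mat_smult: "0 \<le> c \<Longrightarrow> psd_mat n A \<Longrightarrow> psd_mat n (of_real c \<cdot>\<^sub>m A)"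
  unfolding psd_mat_iff_psd_fun psd_fun_def
  by (auto simp: quad_form_cong[of n "\<lambda>i j. (of_real c \<cdot>\<^sub>m A) $$ (i, j)" "\<lambda>i j. of_real c * A $$ (i, j)"] quad_form_scale)

lemma psd_mat_zero: "psd_mat n (0\<^sub>m n n)"
  unfolding psd_mat_iff_psd_fun psd_fun_def by (simp add: quad_form_def)

lemma psd_mat_trace:
  assumes "psd_mat n A"
  shows "mtrace A = of_real (Re (mtrace A))" and "0 \<le> Re (mtrace A)"
proof -
  have A: "A \<in> carrier_mat n n" and P: "psd_fun n (\<lambda>i j. A $$ (i, j))" using assms psd_mat_iff_psd_fun by auto
  have "mtrace A = (\<Sum>i<n. of_real (Re (A $$ (i, i))))"
    unfolding mtrace_def using A psd_fun_diag(1)[OF P] by (auto intro!: sum.cong)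
  then show "mtrace A = of_real (Re (mtrace A))" by simp
  show "0 \<le> Re (mtrace A)"
    unfolding mtrace_def Re_sum using A psd_fun_diag(2)[OF P] by (auto intro!: sum_nonneg)
qed

lemma psd_mat_entry_le_trace:
  assumes "psd_mat n A" "i < n" "j < n"
  shows "cmod (A $$ (i, j)) \<le> Re (mtrace A)"
proof -
  have A: "A \<in> carrier_mat n n" and P: "psd_fun n (\<lambda>i j. A $$ (i, j))"
    using assms(1) psd_mat_iff_psd_fun by auto
  have diag_le: "Re (A $$ (k, k)) \<le> Re (mtrace A)" if "k < n" for k
    unfolding mtrace_def Re_sum using A that psd_fun_diag(2)[OF P] by (intro member_le_sum) auto
  show ?thesis
    using psd_fun_entry_bound[OF P assms(2,3)] diag_le[OF assms(2)] diag_le[OF assms(3)] by simp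
qed

section \<open>Density matrices\<close>

lemma density_mats_carrier: "\<rho> \<in> density_mats n \<Longrightarrow> \<rho> \<in> carrier_mat n n"
  unfolding density_mats_def psd_mat_def hermitian_mat_def by auto

lemma density_mats_entry_bound: "\<rho> \<in> density_mats n \<Longrightarrow> i < n \<Longrightarrow> j < n \<Longrightarrow> cmod (\<rho> $$ (i, j)) \<le> 1"
  using psd_mat_entry_le_trace[of n \<rho> i j] unfolding density_mats_def by simp

lemma density_mats_convex:
  assumes "\<rho>0 \<in> density_mats n" "\<rho>1 \<in> density_mats n" "0 \<le> t" "t \<le> 1"
  shows "of_real (1 - t) \<cdot>\<^sub>m \<rho>0 + of_real t \<cdot>\<^sub>m \<rho>1 \<in> density_mats n"
proof -
  have "mtrace (of_real (1 - t) \<cdot>\<^sub>m \<rho>0 + of_real t \<cdot>\<^sub>m \<rho>1) = of_real (1 - t) * mtrace \<rho>0 + of_real t * mtrace \<rho>1"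
    using density_mats_carrier[OF assms(1)] density_mats_carrier[OF assms(2)]
    by (simp add: mtrace_def sum.distrib sum_distrib_left)
  moreover have "psd_mat n (of_real (1 - t) \<cdot>\<^sub>m \<rho>0 + of_real t \<cdot>\<^sub>m \<rho>1)"
    using assms unfolding density_mats_def by (intro psd_mat_add psd_mat_smult) auto
  ultimately show ?thesis
    using assms unfolding density_mats_def by (simp add: algebra_simps)
qed

lemma density_mats_normalize:
  assumes "psd_mat n S" "0 < Re (mtrace S)"
  shows "of_real (1 / Re (mtrace S)) \<cdot>\<^sub>m S \<in> density_mats n"
proof -
  define c where "c = Re (mtrace S)"
  have "S \<in> carrier_mat n n" using assms(1) psd_mat_iff_psd_fun by blast
  moreover have "mtrace S = of_real c" unfolding c_def by (rule psd_mat_trace(1)[OF assms(1)])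
  ultimately have "mtrace (of_real (1 / c) \<cdot>\<^sub>m S) = of_real (1 / c) * of_real c"
    by (simp only: mtrace_smult)
  then have "mtrace (of_real (1 / c) \<cdot>\<^sub>m S) = 1" using assms(2) unfolding c_def by simp
  then show ?thesis
    using psd_mat_smult[OF _ assms(1), of "1 / c"] assms(2) unfolding c_def density_mats_def by simp
qed

definition pure_state :: "nat \<Rightarrow> (nat \<Rightarrow> complex) \<Rightarrow> complex mat" where
  "pure_state n w = mat n n (\<lambda>(i, j). w i * cnj (w j) / of_real (\<Sum>k<n. (cmod (w k))\<^sup>2))"

lemma pure_state_carrier: "pure_state n w \<in> carrier_mat n n"
  unfolding pure_state_def by simp

lemma pure_state_density:
  assumes "(\<Sum>k<n. (cmod (w k))\<^sup>2) \<noteq> 0"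
  shows "pure_state n w \<in> density_mats n"
proof -
  define W where "W = (\<Sum>k<n. (cmod (w k))\<^sup>2)"
  have W: "W > 0" using assms unfolding W_def by (simp add: order_le_neq_trans sum_nonneg)
  have idx: "pure_state n w $$ (i, j) = w i * cnj (w j) / of_real W" if "i < n" "j < n" for i j
    using that unfolding pure_state_def W_def by simp
  have "0 \<le> Re (quad_form n (\<lambda>i j. pure_state n w $$ (i, j)) x)" for x
  proof -
    define b where "b = (\<Sum>i<n. cnj (x i) * w i)"
    have "quad_form n (\<lambda>i j. pure_state n w $$ (i, j)) x = b * cnj b / of_real W"
      unfolding quad_form_def b_def cnj_sum sum_distrib_right sum_divide_distrib
      by (intro sum.cong refl) (simp add: idx sum_distrib_left sum_divide_distrib mult_ac)
    also have "\<dots> = of_real ((cmod b)\<^sup>2 / W)"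
      by (simp only: of_real_divide complex_norm_square)
    finally show ?thesis using W by simp
  qed
  then have "psd_fun n (\<lambda>i j. pure_state n w $$ (i, j))"
    unfolding psd_fun_def by (simp add: idx mult.commute)
  moreover have "mtrace (pure_state n w) = (\<Sum>i<n. w i * cnj (w i)) / of_real W"
    unfolding mtrace_def carrier_matD(1)[OF pure_state_carrier] by (simp add: idx sum_divide_distrib)
  moreover have "(\<Sum>i<n. w i * cnj (w i)) = of_real W"
    by (simp only: W_def of_real_sum complex_norm_square)
  ultimately show ?thesis
    using W pure_state_carrier unfolding density_mats_def psd_mat_iff_psd_fun by simp
qed

lemma mtrace_pure_state_mult:
  assumes "A \<in> carrier_mat n n"
  shows "mtrace (pure_state n w * A) = quad_form n (\<lambda>i j. A $$ (i, j)) w / of_real (\<Sum>k<n. (cmod (w k))\<^sup>2)"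
  unfolding mtrace_mult[OF pure_state_carrier assms] quad_form_def
  by (subst sum.swap) (simp add: pure_state_def sum_divide_distrib mult_ac)

lemma density_mats_nonempty:
  assumes "n \<ge> 1"
  shows "density_mats n \<noteq> {}"
proof -
  have "(\<Sum>k<n. (cmod (if k = 0 then 1 else 0 :: complex))\<^sup>2) = (\<Sum>k<n. if k = 0 then 1 else 0)"
    by (intro sum.cong) auto
  then show ?thesis using pure_state_density[where n = n and w = "\<lambda>k. if k = 0 then 1 else 0"] assms by auto
qed

lemma psd_mat_iff_trace_density_nonneg:
  assumes "hermitian_mat n X"
  shows "psd_mat n X \<longleftrightarrow> (\<forall>\<rho>\<in>density_mats n. 0 \<le> Re (mtrace (\<rho> * X)))"
proof safe
  fix \<rho> assume "psd_mat n X" "\<rho> \<in> density_mats n"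
  then show "0 \<le> Re (mtrace (\<rho> * X))" using psd_mat_trace_mult_nonneg unfolding density_mats_def by blast
next
  assume dens: "\<forall>\<rho>\<in>density_mats n. 0 \<le> Re (mtrace (\<rho> * X))"
  have X: "X \<in> carrier_mat n n" using assms unfolding hermitian_mat_def by blast
  have "0 \<le> Re (quad_form n (\<lambda>i j. X $$ (i, j)) w)" for w
  proof (cases "(\<Sum>k<n. (cmod (w k))\<^sup>2) = 0")
    case True
    then have "quad_form n (\<lambda>i j. X $$ (i, j)) w = quad_form n (\<lambda>i j. X $$ (i, j)) (\<lambda>_. 0)"
      by (intro quad_form_cong) (simp_all add: sum_nonneg_eq_0_iff)
    then show ?thesis by (simp add: quad_form_def)
  next
    case False
    then have "0 < (\<Sum>k<n. (cmod (w k))\<^sup>2)" by (simp add: order_le_neq_trans sum_nonneg)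
    moreover have "0 \<le> Re (mtrace (pure_state n w * X))" using False dens pure_state_density by blast
    ultimately show ?thesis unfolding mtrace_pure_state_mult[OF X] by (simp add: zero_le_divide_iff)
  qed
  then show "psd_mat n X"
    using assms unfolding psd_mat_iff_psd_fun psd_fun_def hermitian_mat_iff_entries by blast
qed

section \<open>Partial traces and payoffs\<close>

lemma sum_lessThan_mult_nat: "(\<Sum>a<m * n. f a) = (\<Sum>i<m. \<Sum>k<n. f (i * n + k :: nat))"
proof -
  have "sum f {i * n..<i * n + n} = (\<Sum>k<n. f (i * n + k))" for i
    using sum.shift_bounds_nat_ivl[of f 0 "i * n" n] by (simp add: atLeast0LessThan add.commute)
  then show ?thesis by (simp flip: sum.nat_group)
qed

lemma sum_swap4:
  "(\<Sum>k\<in>K. \<Sum>l\<in>L. \<Sum>i\<in>I. \<Sum>j\<in>J. f i j k l) = (\<Sum>i\<in>I. \<Sum>j\<in>J. \<Sum>k\<in>K. \<Sum>l\<in>L. f i j k l)"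
  by (subst sum.swap, subst (2) sum.swap, rule sum.cong[OF refl], subst sum.swap,
      rule sum.cong[OF refl], rule sum.swap)

lemma mult_add_less_mult_nat: "(i::nat) < m \<Longrightarrow> k < n \<Longrightarrow> i * n + k < m * n"
  using mult_le_mono1[of "Suc i" m n] by simp

lemma kron_carrier:
  "A \<in> carrier_mat m m \<Longrightarrow> B \<in> carrier_mat n n \<Longrightarrow> kron A B \<in> carrier_mat (m * n) (m * n)"
  unfolding kron_def by auto

lemma kron_index:
  assumes "A \<in> carrier_mat m m" "B \<in> carrier_mat n n" "i < m" "j < m" "k < n" "l < n"
  shows "kron A B $$ (i * n + k, j * n + l) = A $$ (i, j) * B $$ (k, l)"
  using assms mult_add_less_mult_nat[of i m k n] mult_add_less_mult_nat[of j m l n] unfolding kron_def by simp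

lemma mtrace_kron_mult:
  assumes "\<rho> \<in> carrier_mat m m" "\<sigma> \<in> carrier_mat n n" "G \<in> carrier_mat (m * n) (m * n)"
  shows "mtrace (kron \<rho> \<sigma> * G)
       = (\<Sum>i<m. \<Sum>j<m. \<Sum>k<n. \<Sum>l<n. \<rho> $$ (i, j) * \<sigma> $$ (k, l) * G $$ (j * n + l, i * n + k))"
proof -
  have "mtrace (kron \<rho> \<sigma> * G)
      = (\<Sum>i<m. \<Sum>k<n. \<Sum>j<m. \<Sum>l<n. kron \<rho> \<sigma> $$ (i * n + k, j * n + l) * G $$ (j * n + l, i * n + k))"
    by (simp add: mtrace_mult[OF kron_carrier[OF assms(1,2)] assms(3)] sum_lessThan_mult_nat)
  also have "\<dots> = (\<Sum>i<m. \<Sum>k<n. \<Sum>j<m. \<Sum>l<n. \<rho> $$ (i, j) * \<sigma> $$ (k, l) * G $$ (j * n + l, i * n + k))"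
    using assms by (intro sum.cong refl) (simp add: kron_index)
  also have "\<dots> = (\<Sum>i<m. \<Sum>j<m. \<Sum>k<n. \<Sum>l<n. \<rho> $$ (i, j) * \<sigma> $$ (k, l) * G $$ (j * n + l, i * n + k))"
    by (rule sum.cong[OF refl], rule sum.swap)
  finally show ?thesis .
qed

definition payoff_mat_A :: "nat \<Rightarrow> nat \<Rightarrow> complex mat \<Rightarrow> complex mat \<Rightarrow> complex mat" where
  "payoff_mat_A m n G \<sigma> = ptrace_B m n (kron (1\<^sub>m m) \<sigma> * G)"

definition payoff_mat_B :: "nat \<Rightarrow> nat \<Rightarrow> complex mat \<Rightarrow> complex mat \<Rightarrow> complex mat" where
  "payoff_mat_B m n G \<Omega> = ptrace_A m n (kron \<Omega> (1\<^sub>m n) * G)"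

lemma payoff_mat_A_carrier: "payoff_mat_A m n G \<sigma> \<in> carrier_mat m m"
  unfolding payoff_mat_A_def ptrace_B_def by simp

lemma payoff_mat_B_carrier: "payoff_mat_B m n G \<Omega> \<in> carrier_mat n n"
  unfolding payoff_mat_B_def ptrace_A_def by simp

lemma dim_payoff_mat_B [simp]:
  "dim_row (payoff_mat_B m n G \<Omega>) = n" "dim_col (payoff_mat_B m n G \<Omega>) = n"
  unfolding payoff_mat_B_def ptrace_A_def by simp_all

lemma payoff_mat_A_index:
  assumes "\<sigma> \<in> carrier_mat n n" "G \<in> carrier_mat (m * n) (m * n)" "i < m" "j < m"
  shows "payoff_mat_A m n G \<sigma> $$ (i, j) = (\<Sum>k<n. \<Sum>l<n. \<sigma> $$ (k, l) * G $$ (i * n + l, j * n + k))"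
proof -
  have I: "1\<^sub>m m \<in> carrier_mat m m" by simp
  have "payoff_mat_A m n G \<sigma> $$ (i, j)
      = (\<Sum>k<n. \<Sum>i'<m. \<Sum>l<n. kron (1\<^sub>m m) \<sigma> $$ (i * n + k, i' * n + l) * G $$ (i' * n + l, j * n + k))"
    unfolding payoff_mat_A_def ptrace_B_def using assms mult_add_less_mult_nat
    by (simp add: index_mult_mat_sum[OF kron_carrier[OF I assms(1)] assms(2)] sum_lessThan_mult_nat)
  also have "\<dots> = (\<Sum>k<n. \<Sum>i'<m. if i = i' then (\<Sum>l<n. \<sigma> $$ (k, l) * G $$ (i' * n + l, j * n + k)) else 0)"
    using assms by (intro sum.cong refl) (simp add: kron_index[OF I assms(1)])
  finally show ?thesis using assms(3) by simp
qed

lemma payoff_mat_B_index: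
  assumes "\<Omega> \<in> carrier_mat m m" "G \<in> carrier_mat (m * n) (m * n)" "k < n" "l < n"
  shows "payoff_mat_B m n G \<Omega> $$ (k, l) = (\<Sum>i<m. \<Sum>j<m. \<Omega> $$ (i, j) * G $$ (j * n + k, i * n + l))"
proof -
  have I: "1\<^sub>m n \<in> carrier_mat n n" by simp
  have "payoff_mat_B m n G \<Omega> $$ (k, l)
      = (\<Sum>i<m. \<Sum>j<m. \<Sum>l'<n. kron \<Omega> (1\<^sub>m n) $$ (i * n + k, j * n + l') * G $$ (j * n + l', i * n + l))"
    unfolding payoff_mat_B_def ptrace_A_def using assms mult_add_less_mult_nat
    by (simp add: index_mult_mat_sum[OF kron_carrier[OF assms(1) I] assms(2)] sum_lessThan_mult_nat)
  also have "\<dots> = (\<Sum>i<m. \<Sum>j<m. \<Sum>l'<n. if k = l' then \<Omega> $$ (i, j) * G $$ (j * n + l', i * n + l) else 0)"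
    using assms by (intro sum.cong refl) (simp add: kron_index[OF assms(1) I])
  finally show ?thesis using assms(3) by simp
qed

lemma payoff_eq_trace_payoff_mat_A:
  assumes "\<rho> \<in> carrier_mat m m" "\<sigma> \<in> carrier_mat n n" "G \<in> carrier_mat (m * n) (m * n)"
  shows "payoff G \<rho> \<sigma> = Re (mtrace (\<rho> * payoff_mat_A m n G \<sigma>))"
  unfolding payoff_def mtrace_kron_mult[OF assms] mtrace_mult[OF assms(1) payoff_mat_A_carrier]
  using assms by (simp add: payoff_mat_A_index sum_distrib_left mult.assoc)

lemma payoff_eq_trace_payoff_mat_B:
  assumes "\<rho> \<in> carrier_mat m m" "\<sigma> \<in> carrier_mat n n" "G \<in> carrier_mat (m * n) (m * n)"
  shows "payoff G \<rho> \<sigma> = Re (mtrace (\<sigma> * payoff_mat_B m n G \<rho>))"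
proof -
  have "mtrace (\<sigma> * payoff_mat_B m n G \<rho>)
      = (\<Sum>k<n. \<Sum>l<n. \<Sum>i<m. \<Sum>j<m. \<rho> $$ (i, j) * \<sigma> $$ (k, l) * G $$ (j * n + l, i * n + k))"
    unfolding mtrace_mult[OF assms(2) payoff_mat_B_carrier]
    using assms by (simp add: payoff_mat_B_index sum_distrib_left mult_ac)
  also have "\<dots> = mtrace (kron \<rho> \<sigma> * G)"
    unfolding mtrace_kron_mult[OF assms] by (rule sum_swap4)
  finally show ?thesis unfolding payoff_def by simp
qed

lemma hermitian_payoff_mat_A:
  assumes "hermitian_mat (m * n) G" "hermitian_mat n \<sigma>"
  shows "hermitian_mat m (payoff_mat_A m n G \<sigma>)"
proof -
  have G: "G \<in> carrier_mat (m * n) (m * n)" and \<sigma>: "\<sigma> \<in> carrier_mat n n"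
    using assms unfolding hermitian_mat_def by auto
  have "cnj (payoff_mat_A m n G \<sigma> $$ (i, j)) = payoff_mat_A m n G \<sigma> $$ (j, i)" if "i < m" "j < m" for i j
  proof -
    have "cnj (payoff_mat_A m n G \<sigma> $$ (i, j)) = (\<Sum>k<n. \<Sum>l<n. \<sigma> $$ (l, k) * G $$ (j * n + k, i * n + l))"
      using assms that mult_add_less_mult_nat unfolding hermitian_mat_iff_entries
      by (simp add: payoff_mat_A_index[OF \<sigma> G that])
    also have "\<dots> = payoff_mat_A m n G \<sigma> $$ (j, i)"
      unfolding payoff_mat_A_index[OF \<sigma> G that(2,1)] by (rule sum.swap)
    finally show ?thesis .
  qed
  then show ?thesis unfolding hermitian_mat_iff_entries using payoff_mat_A_carrier by blast
qed

lemma hermitian_payoff_mat_B: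
  assumes "hermitian_mat (m * n) G" "hermitian_mat m \<Omega>"
  shows "hermitian_mat n (payoff_mat_B m n G \<Omega>)"
proof -
  have G: "G \<in> carrier_mat (m * n) (m * n)" and \<Omega>: "\<Omega> \<in> carrier_mat m m"
    using assms unfolding hermitian_mat_def by auto
  have "cnj (payoff_mat_B m n G \<Omega> $$ (k, l)) = payoff_mat_B m n G \<Omega> $$ (l, k)" if "k < n" "l < n" for k l
  proof -
    have "cnj (payoff_mat_B m n G \<Omega> $$ (k, l)) = (\<Sum>i<m. \<Sum>j<m. \<Omega> $$ (j, i) * G $$ (i * n + l, j * n + k))"
      using assms that mult_add_less_mult_nat unfolding hermitian_mat_iff_entries
      by (simp add: payoff_mat_B_index[OF \<Omega> G that])
    also have "\<dots> = payoff_mat_B m n G \<Omega> $$ (l, k)"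
      unfolding payoff_mat_B_index[OF \<Omega> G that(2,1)] by (rule sum.swap)
    finally show ?thesis .
  qed
  then show ?thesis unfolding hermitian_mat_iff_entries using payoff_mat_B_carrier by blast
qed

lemma payoff_mat_B_convex_index:
  assumes "\<Omega>0 \<in> carrier_mat m m" "\<Omega>1 \<in> carrier_mat m m" "G \<in> carrier_mat (m * n) (m * n)" "k < n" "l < n"
  shows "payoff_mat_B m n G (of_real (1 - t) \<cdot>\<^sub>m \<Omega>0 + of_real t \<cdot>\<^sub>m \<Omega>1) $$ (k, l)
       = of_real (1 - t) * payoff_mat_B m n G \<Omega>0 $$ (k, l) + of_real t * payoff_mat_B m n G \<Omega>1 $$ (k, l)"
  using assms
  by (simp add: payoff_mat_B_index algebra_simps sum.distrib sum_distrib_left del: of_real_diff)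

lemma payoff_mat_B_entry_bound:
  assumes "\<Omega> \<in> density_mats m" "G \<in> carrier_mat (m * n) (m * n)" "k < n" "l < n"
  shows "cmod (payoff_mat_B m n G \<Omega> $$ (k, l)) \<le> (\<Sum>k<n. \<Sum>l<n. \<Sum>i<m. \<Sum>j<m. cmod (G $$ (j * n + k, i * n + l)))"
proof -
  have "cmod (payoff_mat_B m n G \<Omega> $$ (k, l)) \<le> (\<Sum>i<m. \<Sum>j<m. cmod (\<Omega> $$ (i, j) * G $$ (j * n + k, i * n + l)))"
    unfolding payoff_mat_B_index[OF density_mats_carrier[OF assms(1)] assms(2-4)]
    by (rule order_trans[OF norm_sum sum_mono[OF norm_sum]])
  also have "\<dots> \<le> (\<Sum>i<m. \<Sum>j<m. cmod (G $$ (j * n + k, i * n + l)))"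
    using density_mats_entry_bound[OF assms(1)] by (intro sum_mono) (simp add: norm_mult mult_left_le_one_le)
  also have "\<dots> \<le> (\<Sum>l<n. \<Sum>i<m. \<Sum>j<m. cmod (G $$ (j * n + k, i * n + l)))"
    using assms(4) by (intro member_le_sum[where f = "\<lambda>l. \<Sum>i<m. \<Sum>j<m. cmod (G $$ (j * n + k, i * n + l))"]) (auto intro!: sum_nonneg)
  also have "\<dots> \<le> (\<Sum>k<n. \<Sum>l<n. \<Sum>i<m. \<Sum>j<m. cmod (G $$ (j * n + k, i * n + l)))"
    using assms(3) by (intro member_le_sum[where f = "\<lambda>k. \<Sum>l<n. \<Sum>i<m. \<Sum>j<m. cmod (G $$ (j * n + k, i * n + l))"]) (auto intro!: sum_nonneg)
  finally show ?thesis .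
qed

section \<open>Security values and the SDP constraints\<close>

lemma payoff_bdd_below:
  assumes "\<sigma> \<in> carrier_mat n n" "G \<in> carrier_mat (m * n) (m * n)"
  shows "bdd_below {payoff G \<rho> \<sigma> | \<rho>. \<rho> \<in> density_mats m}"
proof (rule bdd_belowI)
  let ?M = "payoff_mat_A m n G \<sigma>"
  fix x assume "x \<in> {payoff G \<rho> \<sigma> | \<rho>. \<rho> \<in> density_mats m}"
  then obtain \<rho> where \<rho>: "\<rho> \<in> density_mats m" and x: "x = Re (mtrace (\<rho> * ?M))"
    using payoff_eq_trace_payoff_mat_A[OF density_mats_carrier assms] by blast
  have "cmod (mtrace (\<rho> * ?M)) \<le> (\<Sum>i<m. \<Sum>j<m. cmod (\<rho> $$ (i, j)) * cmod (?M $$ (j, i)))"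
    unfolding mtrace_mult[OF density_mats_carrier[OF \<rho>] payoff_mat_A_carrier] norm_mult[symmetric]
    by (rule order_trans[OF norm_sum sum_mono[OF norm_sum]])
  also have "\<dots> \<le> (\<Sum>i<m. \<Sum>j<m. cmod (?M $$ (j, i)))"
    using density_mats_entry_bound[OF \<rho>] by (intro sum_mono mult_left_le_one_le) auto
  finally show "- (\<Sum>i<m. \<Sum>j<m. cmod (?M $$ (j, i))) \<le> x"
    unfolding x using abs_Re_le_cmod[of "mtrace (\<rho> * ?M)"] by linarith
qed

lemma sec_value_B_le_payoff:
  assumes "\<sigma> \<in> carrier_mat n n" "G \<in> carrier_mat (m * n) (m * n)" "\<rho> \<in> density_mats m"
  shows "sec_value_B m G \<sigma> \<le> payoff G \<rho> \<sigma>"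
  unfolding sec_value_B_def using assms(3) by (intro cInf_lower payoff_bdd_below[OF assms(1,2)]) auto

lemma le_sec_value_B_iff:
  assumes "m \<ge> 1" "\<sigma> \<in> carrier_mat n n" "G \<in> carrier_mat (m * n) (m * n)"
  shows "c \<le> sec_value_B m G \<sigma> \<longleftrightarrow> (\<forall>\<rho>\<in>density_mats m. c \<le> payoff G \<rho> \<sigma>)"
  unfolding sec_value_B_def using density_mats_nonempty[OF assms(1)]
  by (subst le_cInf_iff[OF _ payoff_bdd_below[OF assms(2,3)]]) auto

lemma loewner_ptrace_B_iff:
  assumes "m \<ge> 1" "hermitian_mat (m * n) G" "hermitian_mat n \<sigma>"
  shows "loewner_ge m (ptrace_B m n (kron (1\<^sub>m m) \<sigma> * G)) (of_real u \<cdot>\<^sub>m 1\<^sub>m m)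
     \<longleftrightarrow> u \<le> sec_value_B m G \<sigma>"
proof -
  let ?M = "payoff_mat_A m n G \<sigma>"
  have G: "G \<in> carrier_mat (m * n) (m * n)" and \<sigma>: "\<sigma> \<in> carrier_mat n n"
    using assms unfolding hermitian_mat_def by auto
  have "loewner_ge m (ptrace_B m n (kron (1\<^sub>m m) \<sigma> * G)) (of_real u \<cdot>\<^sub>m 1\<^sub>m m) \<longleftrightarrow> psd_mat m (?M - of_real u \<cdot>\<^sub>m 1\<^sub>m m)"
    unfolding loewner_ge_def payoff_mat_A_def[symmetric] using payoff_mat_A_carrier by auto
  also have "\<dots> \<longleftrightarrow> (\<forall>\<rho>\<in>density_mats m. u \<le> Re (mtrace (\<rho> * ?M)))"
    unfolding psd_mat_iff_trace_density_nonneg[OF hermitian_mat_diff_scalar(1)[OF hermitian_payoff_mat_A[OF assms(2,3)]]]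
    by (intro ball_cong refl) (auto simp: mtrace_mult_diff_scalar(1)[OF density_mats_carrier payoff_mat_A_carrier] density_mats_def)
  also have "\<dots> \<longleftrightarrow> u \<le> sec_value_B m G \<sigma>"
    unfolding le_sec_value_B_iff[OF assms(1) \<sigma> G] using payoff_eq_trace_payoff_mat_A[OF density_mats_carrier \<sigma> G] by auto
  finally show ?thesis .
qed

lemma loewner_ptrace_A_iff:
  assumes "hermitian_mat (m * n) G" "hermitian_mat m \<Omega>"
  shows "loewner_ge n (of_real u \<cdot>\<^sub>m 1\<^sub>m n) (ptrace_A m n (kron \<Omega> (1\<^sub>m n) * G))
     \<longleftrightarrow> (\<forall>\<sigma>\<in>density_mats n. payoff G \<Omega> \<sigma> \<le> u)"
proof -
  let ?N = "payoff_mat_B m n G \<Omega>"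
  have G: "G \<in> carrier_mat (m * n) (m * n)" and \<Omega>: "\<Omega> \<in> carrier_mat m m"
    using assms unfolding hermitian_mat_def by auto
  have "loewner_ge n (of_real u \<cdot>\<^sub>m 1\<^sub>m n) (ptrace_A m n (kron \<Omega> (1\<^sub>m n) * G)) \<longleftrightarrow> psd_mat n (of_real u \<cdot>\<^sub>m 1\<^sub>m n - ?N)"
    unfolding loewner_ge_def payoff_mat_B_def[symmetric] using payoff_mat_B_carrier by auto
  also have "\<dots> \<longleftrightarrow> (\<forall>\<sigma>\<in>density_mats n. Re (mtrace (\<sigma> * ?N)) \<le> u)"
    unfolding psd_mat_iff_trace_density_nonneg[OF hermitian_mat_diff_scalar(2)[OF hermitian_payoff_mat_B[OF assms]]]
    by (intro ball_cong refl) (auto simp: mtrace_mult_diff_scalar(2)[OF density_mats_carrier payoff_mat_B_carrier] density_mats_def)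
  also have "\<dots> \<longleftrightarrow> (\<forall>\<sigma>\<in>density_mats n. payoff G \<Omega> \<sigma> \<le> u)"
    using payoff_eq_trace_payoff_mat_B[OF \<Omega> density_mats_carrier G] by auto
  finally show ?thesis .
qed

section \<open>The minimax theorem\<close>

definition frob_inner :: "nat \<Rightarrow> complex mat \<Rightarrow> complex mat \<Rightarrow> real" where
  "frob_inner n A B = (\<Sum>k<n. \<Sum>l<n. Re (cnj (A $$ (k, l)) * B $$ (k, l)))"

lemma frob_inner_self: "frob_inner n A A = (\<Sum>k<n. \<Sum>l<n. (cmod (A $$ (k, l)))\<^sup>2)"
  unfolding frob_inner_def by (intro sum.cong refl) (metis Re_complex_of_real complex_norm_square mult.commute)

lemma frob_inner_self_eq_0:
  assumes "frob_inner n A A = 0" "k < n" "l < n"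
  shows "A $$ (k, l) = 0"
  using assms unfolding frob_inner_self by (simp add: sum_nonneg sum_nonneg_eq_0_iff)

lemma frob_inner_diff_right:
  assumes "X \<in> carrier_mat n n" "Y \<in> carrier_mat n n"
  shows "frob_inner n S (X - Y) = frob_inner n S X - frob_inner n S Y"
  using assms unfolding frob_inner_def by (simp add: algebra_simps sum_subtractf)

lemma frob_inner_uminus_right:
  assumes "X \<in> carrier_mat n n"
  shows "frob_inner n S (- X) = - frob_inner n S X"
  unfolding frob_inner_def sum_negf[symmetric] using assms by (intro sum.cong refl) simp

lemma frob_inner_scalar_right:
  assumes "S \<in> carrier_mat n n"
  shows "frob_inner n S (of_real c \<cdot>\<^sub>m 1\<^sub>m n) = c * Re (mtrace S)"
proof -
  have "(\<Sum>l<n. Re (cnj (S $$ (k, l)) * (of_real c \<cdot>\<^sub>m 1\<^sub>m n) $$ (k, l))) = c * Re (S $$ (k, k))" if "k < n" for k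
  proof -
    have "(\<Sum>l<n. Re (cnj (S $$ (k, l)) * (of_real c \<cdot>\<^sub>m 1\<^sub>m n) $$ (k, l)))
        = (\<Sum>l<n. if l = k then c * Re (S $$ (k, k)) else 0)"
      using that by (intro sum.cong refl) auto
    then show ?thesis using that by simp
  qed
  then show ?thesis
    unfolding frob_inner_def mtrace_def Re_sum carrier_matD(1)[OF assms] by (simp add: sum_distrib_left)
qed

lemma frob_inner_hermitian:
  assumes "hermitian_mat n S" "X \<in> carrier_mat n n"
  shows "frob_inner n S X = Re (mtrace (X * S))"
proof -
  have S: "S \<in> carrier_mat n n" using assms(1) unfolding hermitian_mat_def by blast
  have "frob_inner n S X = Re (\<Sum>k<n. \<Sum>l<n. S $$ (l, k) * X $$ (k, l))"
    using assms(1) unfolding frob_inner_def hermitian_mat_iff_entries Re_sum by (auto intro!: sum.cong)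
  also have "\<dots> = Re (mtrace (X * S))"
    unfolding mtrace_mult[OF assms(2) S] by (simp add: mult.commute)
  finally show ?thesis .
qed

lemma frob_inner_expand:
  assumes "\<And>k l. k < n \<Longrightarrow> l < n \<Longrightarrow> X $$ (k, l) = S $$ (k, l) + of_real t * D $$ (k, l)"
  shows "frob_inner n X X = frob_inner n S S + 2 * t * frob_inner n S D + t\<^sup>2 * frob_inner n D D"
proof -
  have entry: "(cmod (X $$ (k, l)))\<^sup>2
      = (cmod (S $$ (k, l)))\<^sup>2 + 2 * t * Re (cnj (S $$ (k, l)) * D $$ (k, l)) + t\<^sup>2 * (cmod (D $$ (k, l)))\<^sup>2"
    if "k < n" "l < n" for k l
    unfolding assms[OF that] cmod_power2 by (simp add: power2_eq_square algebra_simps)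
  have "frob_inner n X X = (\<Sum>k<n. \<Sum>l<n. (cmod (S $$ (k, l)))\<^sup>2
      + 2 * t * Re (cnj (S $$ (k, l)) * D $$ (k, l)) + t\<^sup>2 * (cmod (D $$ (k, l)))\<^sup>2)"
    unfolding frob_inner_self by (intro sum.cong refl) (simp add: entry)
  also have "\<dots> = frob_inner n S S + 2 * t * frob_inner n S D + t\<^sup>2 * frob_inner n D D"
    unfolding frob_inner_self frob_inner_def by (simp only: sum.distrib sum_distrib_left)
  finally show ?thesis .
qed

lemma psd_mat_trace_sq_le_frob_inner:
  assumes "psd_mat n P" "n \<ge> 1"
  shows "(Re (mtrace P))\<^sup>2 / n \<le> frob_inner n P P"
proof -
  have P: "P \<in> carrier_mat n n" using assms(1) psd_mat_iff_psd_fun by auto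
  have "(Re (mtrace P))\<^sup>2 \<le> (\<Sum>k<n. (Re (P $$ (k, k)))\<^sup>2) * real (card {..<n})"
    unfolding mtrace_def Re_sum carrier_matD(1)[OF P] by (rule sum_squared_le_sum_of_squares)
  then have "(Re (mtrace P))\<^sup>2 / n \<le> (\<Sum>k<n. (Re (P $$ (k, k)))\<^sup>2)"
    using assms(2) by (simp add: divide_le_eq)
  also have "\<dots> \<le> (\<Sum>k<n. (cmod (P $$ (k, k)))\<^sup>2)"
    by (intro sum_mono) (metis abs_Re_le_cmod abs_ge_zero power2_abs power_mono)
  also have "\<dots> \<le> frob_inner n P P"
    unfolding frob_inner_self by (intro sum_mono member_le_sum) auto
  finally show ?thesis .
qed

lemma frob_inner_add_psd_large_trace:
  assumes "n \<ge> 1" "a \<in> carrier_mat n n" "psd_mat n P"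
    and bound: "\<And>k l. k < n \<Longrightarrow> l < n \<Longrightarrow> cmod (a $$ (k, l)) \<le> A"
    and large: "2 * A * real n ^ 3 < Re (mtrace P)"
  shows "frob_inner n a a < frob_inner n (a + P) (a + P)"
proof -
  define t where "t = Re (mtrace P)"
  have "cmod (a $$ (0, 0)) \<le> A" using bound assms(1) by simp
  then have "0 \<le> A" by (meson norm_ge_zero order_trans)
  then have "0 \<le> 2 * A * real n ^ 3" by simp
  then have t: "0 < t" using large unfolding t_def by linarith
  have P: "P \<in> carrier_mat n n" using assms(3) psd_mat_iff_psd_fun by auto
  have "frob_inner n (a + P) (a + P) = frob_inner n a a + 2 * frob_inner n a P + frob_inner n P P"
    using frob_inner_expand[of n "a + P" a 1 P] assms(2) P by simp
  moreover have "- (A * t) \<le> Re (cnj (a $$ (k, l)) * P $$ (k, l))" if "k < n" "l < n" for k l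
  proof -
    have "cmod (cnj (a $$ (k, l)) * P $$ (k, l)) \<le> A * t"
      unfolding norm_mult complex_mod_cnj t_def
      using bound[OF that] psd_mat_entry_le_trace[OF assms(3) that] \<open>0 \<le> A\<close> by (intro mult_mono) auto
    then show ?thesis using abs_Re_le_cmod[of "cnj (a $$ (k, l)) * P $$ (k, l)"] by linarith
  qed
  then have "(\<Sum>k<n. \<Sum>l<n. - (A * t)) \<le> frob_inner n a P"
    unfolding frob_inner_def by (intro sum_mono) auto
  then have "- (real n * real n * (A * t)) \<le> frob_inner n a P" by simp
  moreover have "t\<^sup>2 / n \<le> frob_inner n P P" unfolding t_def using psd_mat_trace_sq_le_frob_inner[OF assms(3,1)] .
  moreover have "2 * (real n * real n * (A * t)) < t\<^sup>2 / n"
  proof -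
    have "2 * A * real n ^ 3 * t < t * t" using mult_strict_right_mono[OF large[folded t_def] t] .
    then show ?thesis using assms(1) by (simp add: pos_less_divide_eq power2_eq_square power3_eq_cube algebra_simps)
  qed
  ultimately show ?thesis by linarith
qed

lemma continuous_on_entry: "continuous_on UNIV (\<lambda>f :: nat \<Rightarrow> nat \<Rightarrow> complex. f i j)"
  by (rule continuous_on_product_then_coordinatewise[OF continuous_on_product_coordinates])

lemma closed_psd_fun: "closed {f. psd_fun n f}"
proof -
  have "closed {f :: nat \<Rightarrow> nat \<Rightarrow> complex. cnj (f i j) = f j i}" for i j
    by (intro closed_Collect_eq continuous_on_cnj continuous_on_entry)
  moreover have "closed {f. 0 \<le> Re (quad_form n f w)}" for w
    unfolding quad_form_def
    by (intro closed_Collect_le continuous_on_const continuous_on_Re continuous_on_sum continuous_on_mult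
        continuous_on_cnj continuous_on_entry)
  moreover have "{f. psd_fun n f} = (\<Inter>i\<in>{..<n}. \<Inter>j\<in>{..<n}. {f. cnj (f i j) = f j i}) \<inter> (\<Inter>w. {f. 0 \<le> Re (quad_form n f w)})"
    unfolding psd_fun_def by auto
  ultimately show ?thesis by (metis (no_types, lifting) closed_INT closed_Int)
qed

lemma compact_PiE_UNIV: "(\<And>i. compact (S i)) \<Longrightarrow> compact (Pi\<^sub>E UNIV S)"
  using compactin_PiE[of "\<lambda>_. euclidean" UNIV S] by (simp add: euclidean_product_topology)

lemma compact_complex_box: "compact {z :: complex. \<bar>Re z\<bar> \<le> B \<and> \<bar>Im z\<bar> \<le> B}"
proof -
  have "{z :: complex. \<bar>Re z\<bar> \<le> B \<and> \<bar>Im z\<bar> \<le> B} = (\<lambda>p. Complex (fst p) (snd p)) ` ({-B..B} \<times> {-B..B})"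
  proof (intro equalityI subsetI)
    fix z assume "z \<in> {z :: complex. \<bar>Re z\<bar> \<le> B \<and> \<bar>Im z\<bar> \<le> B}"
    then show "z \<in> (\<lambda>p. Complex (fst p) (snd p)) ` ({-B..B} \<times> {-B..B})"
      by (intro image_eqI[of _ _ "(Re z, Im z)"]) (auto simp: abs_le_iff)
  qed (auto simp: abs_le_iff)
  moreover have "continuous_on UNIV (\<lambda>p :: real \<times> real. Complex (fst p) (snd p))"
    by (intro continuous_on_Complex continuous_on_fst continuous_on_snd continuous_on_id)
  ultimately show ?thesis
    by (metis compact_Icc compact_Times compact_continuous_image continuous_on_subset subset_UNIV)
qed

lemma compact_entry_box: "compact {f :: nat \<Rightarrow> nat \<Rightarrow> complex. \<forall>i j. cmod (f i j) \<le> B}"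
proof -
  let ?S = "{f :: nat \<Rightarrow> nat \<Rightarrow> complex. \<forall>i j. cmod (f i j) \<le> B}"
  let ?box = "Pi\<^sub>E UNIV (\<lambda>_. Pi\<^sub>E UNIV (\<lambda>_. {z :: complex. \<bar>Re z\<bar> \<le> B \<and> \<bar>Im z\<bar> \<le> B}))"
  have "closed {f :: nat \<Rightarrow> nat \<Rightarrow> complex. cmod (f i j) \<le> B}" for i j
    by (intro closed_Collect_le continuous_on_norm continuous_on_const continuous_on_entry)
  moreover have "?S = (\<Inter>i. \<Inter>j. {f. cmod (f i j) \<le> B})" by auto
  ultimately have "closed ?S" by auto
  moreover have "compact ?box" by (intro compact_PiE_UNIV compact_complex_box)
  moreover have "?S \<subseteq> ?box"
  proof
    fix f assume "f \<in> ?S"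
    then have "cmod (f i j) \<le> B" for i j by simp
    then have "\<bar>Re (f i j)\<bar> \<le> B \<and> \<bar>Im (f i j)\<bar> \<le> B" for i j
      using abs_Re_le_cmod[of "f i j"] abs_Im_le_cmod[of "f i j"] by (meson order_trans)
    then show "f \<in> ?box" by (simp add: PiE_iff)
  qed
  ultimately show ?thesis using closed_Int_compact[of ?S ?box] Int_absorb2[of ?S ?box] by simp
qed

lemma compact_psd_fun_box:
  assumes "closed T"
  shows "compact {f. psd_fun n f \<and> (\<Sum>i<n. f i i) \<in> T \<and> (\<forall>i j. cmod (f i j) \<le> B)}"
proof -
  have "closed ((\<lambda>f :: nat \<Rightarrow> nat \<Rightarrow> complex. \<Sum>i<n. f i i) -` T)"
    using assms by (intro closed_vimage continuous_on_sum continuous_on_entry)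
  then have "compact (({f. psd_fun n f} \<inter> (\<lambda>f. \<Sum>i<n. f i i) -` T) \<inter> {f. \<forall>i j. cmod (f i j) \<le> B})"
    by (intro closed_Int_compact closed_Int closed_psd_fun compact_entry_box)
  then show ?thesis by (simp add: Collect_conj_eq Int_assoc vimage_def)
qed

lemma psd_mat_mat_iff: "psd_mat k (mat k k (\<lambda>(i, j). f i j)) \<longleftrightarrow> psd_fun k f"
proof -
  have "quad_form k (\<lambda>i j. mat k k (\<lambda>(i, j). f i j) $$ (i, j)) w = quad_form k f w" for w
    by (intro quad_form_cong) auto
  then show ?thesis unfolding psd_mat_iff_psd_fun psd_fun_def by auto
qed

definition entry_fun :: "nat \<Rightarrow> complex mat \<Rightarrow> nat \<Rightarrow> nat \<Rightarrow> complex" where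
  "entry_fun k A i j = (if i < k \<and> j < k then A $$ (i, j) else 0)"

lemma mat_entry_fun: "A \<in> carrier_mat k k \<Longrightarrow> mat k k (\<lambda>(i, j). entry_fun k A i j) = A"
  unfolding entry_fun_def by auto

text \<open>
  Matrices are handled through their entry functions \<open>nat \<Rightarrow> nat \<Rightarrow> complex\<close>, whose product
  topology makes entrywise bounded closed sets compact; \<open>entry_fun\<close> pads a matrix with zeros.
\<close>
lemma exists_min_density_psd_bounded_trace:
  fixes F :: "complex mat \<Rightarrow> complex mat \<Rightarrow> real"
  assumes "m \<ge> 1" "0 \<le> R"
    and cont: "continuous_on UNIV (\<lambda>(f, g). F (mat m m (\<lambda>(i, j). f i j)) (mat n n (\<lambda>(i, j). g i j)))"
  shows "\<exists>\<Omega>0 P0. \<Omega>0 \<in> density_mats m \<and> psd_mat n P0 \<and> Re (mtrace P0) \<le> R \<and>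
    (\<forall>\<Omega> P. \<Omega> \<in> density_mats m \<longrightarrow> psd_mat n P \<longrightarrow> Re (mtrace P) \<le> R \<longrightarrow> F \<Omega>0 P0 \<le> F \<Omega> P)"
proof -
  define K\<^sub>A where "K\<^sub>A = {f. psd_fun m f \<and> (\<Sum>i<m. f i i) \<in> {1} \<and> (\<forall>i j. cmod (f i j) \<le> 1)}"
  define K\<^sub>B where "K\<^sub>B = {g. psd_fun n g \<and> (\<Sum>i<n. g i i) \<in> {z. Re z \<le> R} \<and> (\<forall>i j. cmod (g i j) \<le> R)}"
  have "closed {z :: complex. Re z \<le> R}"
    by (intro closed_Collect_le continuous_on_Re continuous_on_id continuous_on_const)
  then have "compact (K\<^sub>A \<times> K\<^sub>B)"
    unfolding K\<^sub>A_def K\<^sub>B_def by (intro compact_Times compact_psd_fun_box closed_singleton)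
  have K: "(entry_fun m \<Omega>, entry_fun n P) \<in> K\<^sub>A \<times> K\<^sub>B"
    if "\<Omega> \<in> density_mats m" "psd_mat n P" "Re (mtrace P) \<le> R" for \<Omega> P
  proof -
    have C: "\<Omega> \<in> carrier_mat m m" "P \<in> carrier_mat n n"
      using that density_mats_carrier psd_mat_iff_psd_fun by auto
    have "cmod (entry_fun m \<Omega> i j) \<le> 1" for i j
      using density_mats_entry_bound[OF that(1)] unfolding entry_fun_def by auto
    moreover have "cmod (entry_fun n P i j) \<le> R" for i j
      using psd_mat_entry_le_trace[OF that(2), of i j] that(3) \<open>0 \<le> R\<close> unfolding entry_fun_def by auto
    ultimately show ?thesis
      using that psd_mat_mat_iff[of m "entry_fun m \<Omega>"] psd_mat_mat_iff[of n "entry_fun n P"]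
        carrier_matD[OF C(1)] carrier_matD[OF C(2)]
      unfolding K\<^sub>A_def K\<^sub>B_def mat_entry_fun[OF C(1)] mat_entry_fun[OF C(2)] density_mats_def
      by (auto simp: mtrace_def entry_fun_def)
  qed
  obtain \<Omega>1 where "\<Omega>1 \<in> density_mats m" using density_mats_nonempty[OF assms(1)] by blast
  then have "K\<^sub>A \<times> K\<^sub>B \<noteq> {}" using K[of \<Omega>1 "0\<^sub>m n n"] psd_mat_zero assms(2) by (auto simp: mtrace_def)
  then obtain f0 g0 where fg0: "(f0, g0) \<in> K\<^sub>A \<times> K\<^sub>B"
    and min: "\<And>f g. (f, g) \<in> K\<^sub>A \<times> K\<^sub>B \<Longrightarrow>
      F (mat m m (\<lambda>(i, j). f0 i j)) (mat n n (\<lambda>(i, j). g0 i j)) \<le> F (mat m m (\<lambda>(i, j). f i j)) (mat n n (\<lambda>(i, j). g i j))"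
    using continuous_attains_inf[OF \<open>compact (K\<^sub>A \<times> K\<^sub>B)\<close> _ continuous_on_subset[OF cont subset_UNIV]] by fastforce
  show ?thesis
  proof (intro exI conjI allI impI)
    show "mat m m (\<lambda>(i, j). f0 i j) \<in> density_mats m" "psd_mat n (mat n n (\<lambda>(i, j). g0 i j))"
      "Re (mtrace (mat n n (\<lambda>(i, j). g0 i j))) \<le> R"
      using fg0 unfolding K\<^sub>A_def K\<^sub>B_def density_mats_def by (auto simp: psd_mat_mat_iff mtrace_def)
    fix \<Omega> P assume "\<Omega> \<in> density_mats m" "psd_mat n P" "Re (mtrace P) \<le> R"
    then show "F (mat m m (\<lambda>(i, j). f0 i j)) (mat n n (\<lambda>(i, j). g0 i j)) \<le> F \<Omega> P"
      using min[OF K] density_mats_carrier psd_mat_iff_psd_fun mat_entry_fun by auto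
  qed
qed

lemma nonneg_of_quadratic_nonneg:
  fixes a b :: real
  assumes "\<And>t. 0 < t \<Longrightarrow> t \<le> 1 \<Longrightarrow> 0 \<le> 2 * t * a + t\<^sup>2 * b"
  shows "0 \<le> a"
proof (rule ccontr)
  assume "\<not> 0 \<le> a"
  define t where "t = min 1 (- a / (\<bar>b\<bar> + 1))"
  have "0 < - a / (\<bar>b\<bar> + 1)" using \<open>\<not> 0 \<le> a\<close> by (intro divide_pos_pos) auto
  then have t: "0 < t" "t \<le> 1" unfolding t_def by auto
  have "t * (\<bar>b\<bar> + 1) \<le> - a"
    using pos_le_divide_eq[of "\<bar>b\<bar> + 1" t "- a"] unfolding t_def by auto
  then have "t * \<bar>b\<bar> \<le> - a" using t(1) by (simp add: algebra_simps)
  then have "t * (t * \<bar>b\<bar>) \<le> t * (- a)" using t(1) by (intro mult_left_mono) auto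
  moreover have "t\<^sup>2 * b \<le> t * (t * \<bar>b\<bar>)"
    using t(1) by (simp add: power2_eq_square mult_left_mono)
  moreover have "t * a < 0" using t(1) \<open>\<not> 0 \<le> a\<close> by (simp add: mult_pos_neg)
  ultimately show False using assms[OF t] by linarith
qed

text \<open>
  \<open>\<Omega>\<close> is a security policy of player A of value \<open>v\<close> iff \<open>v I - payoff_mat_B \<Omega>\<close> is PSD,
  i.e. iff \<open>residual \<Omega> P = 0\<close> for some PSD \<open>P\<close>; the minimax proof minimises its Frobenius norm.
\<close>

definition residual :: "nat \<Rightarrow> nat \<Rightarrow> complex mat \<Rightarrow> real \<Rightarrow> complex mat \<Rightarrow> complex mat \<Rightarrow> complex mat" where
  "residual m n G v \<Omega> P = payoff_mat_B m n G \<Omega> - of_real v \<cdot>\<^sub>m 1\<^sub>m n + P"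

lemma residual_carrier: "P \<in> carrier_mat n n \<Longrightarrow> residual m n G v \<Omega> P \<in> carrier_mat n n"
  unfolding residual_def by (simp add: payoff_mat_B_carrier)

lemma residual_index:
  assumes "P \<in> carrier_mat n n" "k < n" "l < n"
  shows "residual m n G v \<Omega> P $$ (k, l)
       = payoff_mat_B m n G \<Omega> $$ (k, l) - (if k = l then of_real v else 0) + P $$ (k, l)"
  using assms payoff_mat_B_carrier[of m n G \<Omega>] unfolding residual_def by simp

lemma residual_zero_entry_bound:
  assumes "\<Omega> \<in> density_mats m" "G \<in> carrier_mat (m * n) (m * n)" "k < n" "l < n"
  shows "cmod (residual m n G v \<Omega> (0\<^sub>m n n) $$ (k, l))
       \<le> (\<Sum>k<n. \<Sum>l<n. \<Sum>i<m. \<Sum>j<m. cmod (G $$ (j * n + k, i * n + l))) + \<bar>v\<bar>"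
proof -
  have "cmod (residual m n G v \<Omega> (0\<^sub>m n n) $$ (k, l))
      \<le> cmod (payoff_mat_B m n G \<Omega> $$ (k, l)) + cmod (if k = l then of_real v else 0 :: complex)"
    using assms(3,4) by (simp add: residual_index norm_triangle_ineq4)
  then show ?thesis using payoff_mat_B_entry_bound[OF assms] by (simp split: if_splits)
qed

lemma continuous_on_residual_norm:
  assumes "G \<in> carrier_mat (m * n) (m * n)"
  shows "continuous_on UNIV (\<lambda>(f, g). frob_inner n
    (residual m n G v (mat m m (\<lambda>(i, j). f i j)) (mat n n (\<lambda>(i, j). g i j)))
    (residual m n G v (mat m m (\<lambda>(i, j). f i j)) (mat n n (\<lambda>(i, j). g i j))))"
proof -
  have entries: "frob_inner n
      (residual m n G v (mat m m (\<lambda>(i, j). f i j)) (mat n n (\<lambda>(i, j). g i j)))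
      (residual m n G v (mat m m (\<lambda>(i, j). f i j)) (mat n n (\<lambda>(i, j). g i j)))
    = (\<Sum>k<n. \<Sum>l<n. (cmod ((\<Sum>i<m. \<Sum>j<m. f i j * G $$ (j * n + k, i * n + l))
        - (if k = l then of_real v else 0) + g k l))\<^sup>2)" for f g
    unfolding frob_inner_self using assms
    by (intro sum.cong refl) (simp add: residual_index payoff_mat_B_index)
  have coords: "continuous_on UNIV (\<lambda>p :: (nat \<Rightarrow> nat \<Rightarrow> complex) \<times> (nat \<Rightarrow> nat \<Rightarrow> complex). fst p i j)"
    "continuous_on UNIV (\<lambda>p :: (nat \<Rightarrow> nat \<Rightarrow> complex) \<times> (nat \<Rightarrow> nat \<Rightarrow> complex). snd p i j)" for i j
    using continuous_on_compose2[OF continuous_on_entry[of i j] continuous_on_fst[OF continuous_on_id]]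
      continuous_on_compose2[OF continuous_on_entry[of i j] continuous_on_snd[OF continuous_on_id]] by auto
  show ?thesis
    unfolding entries unfolding split_def by (intro continuous_intros coords)
qed

lemma exists_residual_min:
  assumes "m \<ge> 1" "n \<ge> 1" "G \<in> carrier_mat (m * n) (m * n)"
  shows "\<exists>\<Omega>0 P0. \<Omega>0 \<in> density_mats m \<and> psd_mat n P0 \<and>
    (\<forall>\<Omega> P. \<Omega> \<in> density_mats m \<longrightarrow> psd_mat n P \<longrightarrow>
      frob_inner n (residual m n G v \<Omega>0 P0) (residual m n G v \<Omega>0 P0)
        \<le> frob_inner n (residual m n G v \<Omega> P) (residual m n G v \<Omega> P))"
proof -
  let ?F = "\<lambda>\<Omega> P. frob_inner n (residual m n G v \<Omega> P) (residual m n G v \<Omega> P)"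
  define A where "A = (\<Sum>k<n. \<Sum>l<n. \<Sum>i<m. \<Sum>j<m. cmod (G $$ (j * n + k, i * n + l))) + \<bar>v\<bar>"
  define R where "R = 2 * A * real n ^ 3"
  have "0 \<le> A" unfolding A_def by (intro add_nonneg_nonneg sum_nonneg) auto
  then have "0 \<le> R" unfolding R_def by simp
  obtain \<Omega>0 P0 where \<Omega>0: "\<Omega>0 \<in> density_mats m" and P0: "psd_mat n P0"
    and min: "\<And>\<Omega> P. \<Omega> \<in> density_mats m \<Longrightarrow> psd_mat n P \<Longrightarrow> Re (mtrace P) \<le> R \<Longrightarrow> ?F \<Omega>0 P0 \<le> ?F \<Omega> P"
    using exists_min_density_psd_bounded_trace[OF assms(1) \<open>0 \<le> R\<close> continuous_on_residual_norm[OF assms(3)]]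
    by blast
  (* Beyond trace R, adding P to residual Omega 0 only increases the norm, so the minimum over the
     truncated set is global. *)
  have "?F \<Omega>0 P0 \<le> ?F \<Omega> P" if \<Omega>: "\<Omega> \<in> density_mats m" and P: "psd_mat n P" for \<Omega> P
  proof (cases "Re (mtrace P) \<le> R")
    case False
    have P': "P \<in> carrier_mat n n" using P psd_mat_iff_psd_fun by blast
    have "?F \<Omega>0 P0 \<le> ?F \<Omega> (0\<^sub>m n n)" using min[OF \<Omega> psd_mat_zero] \<open>0 \<le> R\<close> by (simp add: mtrace_def)
    also have "\<dots> < frob_inner n (residual m n G v \<Omega> (0\<^sub>m n n) + P) (residual m n G v \<Omega> (0\<^sub>m n n) + P)"
      using False residual_zero_entry_bound[OF \<Omega> assms(3)] unfolding R_def A_def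
      by (intro frob_inner_add_psd_large_trace[OF assms(2) residual_carrier P]) auto
    also have "residual m n G v \<Omega> (0\<^sub>m n n) + P = residual m n G v \<Omega> P"
      using P' unfolding residual_def by (intro eq_matI) auto
    finally show ?thesis by simp
  qed (use min \<Omega> P in blast)
  then show ?thesis using \<Omega>0 P0 by blast
qed

context
  fixes m n :: nat and G :: "complex mat" and v :: real and \<Omega>0 P0 :: "complex mat"
  assumes herm_G: "hermitian_mat (m * n) G"
    and \<Omega>0: "\<Omega>0 \<in> density_mats m" and P0: "psd_mat n P0"
    and min: "\<And>\<Omega> P. \<Omega> \<in> density_mats m \<Longrightarrow> psd_mat n P \<Longrightarrow>
      frob_inner n (residual m n G v \<Omega>0 P0) (residual m n G v \<Omega>0 P0)
        \<le> frob_inner n (residual m n G v \<Omega> P) (residual m n G v \<Omega> P)"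
begin

lemma residual_min_first_order:
  assumes \<Omega>1: "\<Omega>1 \<in> density_mats m" and P1: "psd_mat n P1"
  shows "0 \<le> frob_inner n (residual m n G v \<Omega>0 P0) (residual m n G v \<Omega>1 P1 - residual m n G v \<Omega>0 P0)"
proof -
  let ?S = "residual m n G v \<Omega>0 P0"
  let ?D = "residual m n G v \<Omega>1 P1 - ?S"
  have G: "G \<in> carrier_mat (m * n) (m * n)" using herm_G unfolding hermitian_mat_def by blast
  have C: "\<Omega>0 \<in> carrier_mat m m" "\<Omega>1 \<in> carrier_mat m m" "P0 \<in> carrier_mat n n" "P1 \<in> carrier_mat n n"
    using \<Omega>0 \<Omega>1 P0 P1 density_mats_carrier psd_mat_iff_psd_fun by auto
  show ?thesis
  proof (rule nonneg_of_quadratic_nonneg)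
    fix t :: real assume t: "0 < t" "t \<le> 1"
    let ?\<Omega>t = "of_real (1 - t) \<cdot>\<^sub>m \<Omega>0 + of_real t \<cdot>\<^sub>m \<Omega>1"
    let ?Pt = "of_real (1 - t) \<cdot>\<^sub>m P0 + of_real t \<cdot>\<^sub>m P1"
    have "residual m n G v ?\<Omega>t ?Pt $$ (k, l) = ?S $$ (k, l) + of_real t * ?D $$ (k, l)" if "k < n" "l < n" for k l
      using that C carrier_matD[OF residual_carrier[OF C(3)]] carrier_matD[OF residual_carrier[OF C(4)]]
      by (simp add: residual_index payoff_mat_B_convex_index[OF C(1,2) G] del: of_real_diff)
        (simp add: algebra_simps)
    then have "frob_inner n (residual m n G v ?\<Omega>t ?Pt) (residual m n G v ?\<Omega>t ?Pt)
        = frob_inner n ?S ?S + 2 * t * frob_inner n ?S ?D + t\<^sup>2 * frob_inner n ?D ?D"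
      by (rule frob_inner_expand)
    moreover have "?\<Omega>t \<in> density_mats m" using \<Omega>0 \<Omega>1 t by (intro density_mats_convex) auto
    moreover have "psd_mat n ?Pt" using P0 P1 t by (intro psd_mat_add psd_mat_smult) auto
    ultimately show "0 \<le> 2 * t * frob_inner n ?S ?D + t\<^sup>2 * frob_inner n ?D ?D"
      using min by fastforce
  qed
qed

lemma hermitian_residual_min: "hermitian_mat n (residual m n G v \<Omega>0 P0)"
  using herm_G \<Omega>0 P0 unfolding residual_def density_mats_def psd_mat_def
  by (intro hermitian_mat_add hermitian_mat_diff_scalar hermitian_payoff_mat_B) auto

lemma residual_min_perturb_P:
  assumes "X \<in> carrier_mat n n"
  shows "residual m n G v \<Omega>0 (P0 + X) - residual m n G v \<Omega>0 P0 = X"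
  using assms P0 payoff_mat_B_carrier[of m n G \<Omega>0] unfolding residual_def psd_mat_iff_psd_fun
  by (intro eq_matI) auto

lemma psd_residual_min: "psd_mat n (residual m n G v \<Omega>0 P0)"
  unfolding psd_mat_iff_trace_density_nonneg[OF hermitian_residual_min]
proof
  fix \<rho> assume \<rho>: "\<rho> \<in> density_mats n"
  then have "psd_mat n (P0 + \<rho>)" using P0 psd_mat_add unfolding density_mats_def by blast
  then have "0 \<le> frob_inner n (residual m n G v \<Omega>0 P0) \<rho>"
    using residual_min_first_order[OF \<Omega>0] residual_min_perturb_P[OF density_mats_carrier[OF \<rho>]] by metis
  then show "0 \<le> Re (mtrace (\<rho> * residual m n G v \<Omega>0 P0))"
    unfolding frob_inner_hermitian[OF hermitian_residual_min density_mats_carrier[OF \<rho>]] .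
qed

lemma frob_inner_residual_min_P0: "frob_inner n (residual m n G v \<Omega>0 P0) P0 = 0"
proof -
  have P0C: "P0 \<in> carrier_mat n n" using P0 psd_mat_iff_psd_fun by blast
  have "residual m n G v \<Omega>0 (0\<^sub>m n n) = residual m n G v \<Omega>0 (P0 + - P0)"
    using P0C unfolding residual_def by (intro eq_matI) auto
  then have "0 \<le> frob_inner n (residual m n G v \<Omega>0 P0) (- P0)"
    using residual_min_first_order[OF \<Omega>0 psd_mat_zero] residual_min_perturb_P[of "- P0"] P0C by fastforce
  moreover have "0 \<le> frob_inner n (residual m n G v \<Omega>0 P0) P0"
    using residual_min_first_order[OF \<Omega>0 psd_mat_add[OF P0 P0]] residual_min_perturb_P[OF P0C] by simp
  ultimately show ?thesis
    using frob_inner_uminus_right[OF P0C, where S = "residual m n G v \<Omega>0 P0"] by linarith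
qed

lemma residual_min_payoff_bound:
  assumes \<Omega>: "\<Omega> \<in> density_mats m"
  shows "frob_inner n (residual m n G v \<Omega>0 P0) (residual m n G v \<Omega>0 P0) + v * Re (mtrace (residual m n G v \<Omega>0 P0))
       \<le> Re (mtrace (payoff_mat_B m n G \<Omega> * residual m n G v \<Omega>0 P0))"
proof -
  let ?S = "residual m n G v \<Omega>0 P0"
  let ?N = "payoff_mat_B m n G"
  have P0C: "P0 \<in> carrier_mat n n" using P0 psd_mat_iff_psd_fun by blast
  have SC: "?S \<in> carrier_mat n n" by (rule residual_carrier[OF P0C])
  have "residual m n G v \<Omega> P0 - ?S = ?N \<Omega> - ?N \<Omega>0"
    using P0C payoff_mat_B_carrier[of m n G] unfolding residual_def by (intro eq_matI) auto
  then have "0 \<le> frob_inner n ?S (?N \<Omega>) - frob_inner n ?S (?N \<Omega>0)"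
    using residual_min_first_order[OF \<Omega> P0] frob_inner_diff_right[OF payoff_mat_B_carrier payoff_mat_B_carrier] by metis
  moreover have "?N \<Omega>0 = ?S + of_real v \<cdot>\<^sub>m 1\<^sub>m n - P0"
    using P0C payoff_mat_B_carrier[of m n G \<Omega>0] unfolding residual_def by (intro eq_matI) auto
  then have "frob_inner n ?S (?N \<Omega>0) = frob_inner n ?S ?S + v * Re (mtrace ?S) - frob_inner n ?S P0"
    using SC P0C frob_inner_scalar_right[OF SC, of v]
    by (simp add: frob_inner_def algebra_simps sum.distrib sum_subtractf)
  ultimately show ?thesis
    using frob_inner_residual_min_P0 frob_inner_hermitian[OF hermitian_residual_min payoff_mat_B_carrier[of m n G \<Omega>]]
    by linarith
qed

lemma residual_min_eq_0:
  assumes "m \<ge> 1" and le_v: "\<forall>\<sigma>\<in>density_mats n. sec_value_B m G \<sigma> \<le> v" and "k < n" "l < n"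
  shows "residual m n G v \<Omega>0 P0 $$ (k, l) = 0"
proof -
  let ?S = "residual m n G v \<Omega>0 P0"
  define c where "c = Re (mtrace ?S)"
  have G: "G \<in> carrier_mat (m * n) (m * n)" using herm_G unfolding hermitian_mat_def by blast
  have SC: "?S \<in> carrier_mat n n" using residual_carrier P0 psd_mat_iff_psd_fun by blast
  have "0 \<le> c" unfolding c_def using psd_mat_trace(2)[OF psd_residual_min] .
  show ?thesis
  proof (cases "c = 0")
    case True
    then show ?thesis using psd_mat_entry_le_trace[OF psd_residual_min assms(3,4)] unfolding c_def by simp
  next
    case False
    then have c: "0 < c" using \<open>0 \<le> c\<close> by simp
    (* Then S / tr S would be a strategy of B securing more than v unless S = 0. *)
    define y where "y = of_real (1 / c) \<cdot>\<^sub>m ?S"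
    have y: "y \<in> density_mats n"
      using density_mats_normalize[OF psd_residual_min] c unfolding y_def c_def by blast
    have yC: "y \<in> carrier_mat n n" using SC unfolding y_def by simp
    have "v + frob_inner n ?S ?S / c \<le> payoff G \<Omega> y" if \<Omega>: "\<Omega> \<in> density_mats m" for \<Omega>
    proof -
      have "payoff G \<Omega> y = Re (mtrace (payoff_mat_B m n G \<Omega> * y))"
        using payoff_eq_trace_payoff_mat_B[OF density_mats_carrier[OF \<Omega>] yC G]
          mtrace_mult_commute[OF yC payoff_mat_B_carrier] by simp
      also have "\<dots> = Re (mtrace (payoff_mat_B m n G \<Omega> * ?S)) / c"
        unfolding y_def mult_smult_distrib[OF payoff_mat_B_carrier SC]
          mtrace_smult[OF mult_carrier_mat[OF payoff_mat_B_carrier SC]] by simp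
      finally show ?thesis
        using residual_min_payoff_bound[OF \<Omega>] c by (simp add: field_simps c_def)
    qed
    then have "v + frob_inner n ?S ?S / c \<le> sec_value_B m G y"
      using le_sec_value_B_iff[OF assms(1) yC G] by blast
    then have "frob_inner n ?S ?S / c \<le> 0" using le_v y by fastforce
    then have "frob_inner n ?S ?S \<le> 0" using c by (simp add: divide_le_0_iff)
    moreover have "0 \<le> frob_inner n ?S ?S" unfolding frob_inner_self by (intro sum_nonneg) auto
    ultimately have "frob_inner n ?S ?S = 0" by linarith
    then show ?thesis using frob_inner_self_eq_0 assms(3,4) by blast
  qed
qed

end

lemma minimax_density:
  assumes "m \<ge> 1" "n \<ge> 1" "hermitian_mat (m * n) G"
    and le_v: "\<forall>\<sigma>\<in>density_mats n. sec_value_B m G \<sigma> \<le> v"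
  shows "\<exists>\<Omega>\<in>density_mats m. \<forall>\<sigma>\<in>density_mats n. payoff G \<Omega> \<sigma> \<le> v"
proof -
  have G: "G \<in> carrier_mat (m * n) (m * n)" using assms(3) unfolding hermitian_mat_def by blast
  obtain \<Omega>0 P0 where \<Omega>0: "\<Omega>0 \<in> density_mats m" and P0: "psd_mat n P0"
    and min: "\<And>\<Omega> P. \<Omega> \<in> density_mats m \<Longrightarrow> psd_mat n P \<Longrightarrow>
      frob_inner n (residual m n G v \<Omega>0 P0) (residual m n G v \<Omega>0 P0)
        \<le> frob_inner n (residual m n G v \<Omega> P) (residual m n G v \<Omega> P)"
    using exists_residual_min[OF assms(1,2) G, of v] by blast
  have P0C: "P0 \<in> carrier_mat n n" using P0 psd_mat_iff_psd_fun by blast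
  have "of_real v \<cdot>\<^sub>m 1\<^sub>m n - payoff_mat_B m n G \<Omega>0 = P0"
  proof (rule eq_matI)
    fix k l assume "k < dim_row P0" "l < dim_col P0"
    then have kl: "k < n" "l < n" using P0C by auto
    show "(of_real v \<cdot>\<^sub>m 1\<^sub>m n - payoff_mat_B m n G \<Omega>0) $$ (k, l) = P0 $$ (k, l)"
      using residual_min_eq_0[OF assms(3) \<Omega>0 P0 min assms(1) le_v kl] kl
      by (simp add: residual_index[OF P0C kl] algebra_simps)
  qed (use P0C in auto)
  then have "loewner_ge n (of_real v \<cdot>\<^sub>m 1\<^sub>m n) (ptrace_A m n (kron \<Omega>0 (1\<^sub>m n) * G))"
    using P0 payoff_mat_B_carrier unfolding loewner_ge_def payoff_mat_B_def by auto
  then show ?thesis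
    using loewner_ptrace_A_iff[OF assms(3)] \<Omega>0 unfolding density_mats_def psd_mat_def by blast
qed

section \<open>The bilevel deception problem\<close>

lemma Phi_B_iff_sdp_constraints:
  assumes "m \<ge> 1" "n \<ge> 1" "hermitian_mat (m * n) G"
  shows "\<rho>B \<in> Phi_B m n G \<longleftrightarrow> \<rho>B \<in> density_mats n \<and>
    (\<exists>\<Omega> u. \<Omega> \<in> density_mats m \<and>
      loewner_ge m (ptrace_B m n (kron (1\<^sub>m m) \<rho>B * G)) (of_real u \<cdot>\<^sub>m 1\<^sub>m m) \<and>
      loewner_ge n (of_real u \<cdot>\<^sub>m 1\<^sub>m n) (ptrace_A m n (kron \<Omega> (1\<^sub>m n) * G)))"
    (is "_ \<longleftrightarrow> _ \<and> (\<exists>\<Omega> u. ?sdp \<Omega> u)")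
proof -
  have G: "G \<in> carrier_mat (m * n) (m * n)" using assms(3) unfolding hermitian_mat_def by blast
  have herm: "\<And>\<rho> k. \<rho> \<in> density_mats k \<Longrightarrow> hermitian_mat k \<rho>"
    unfolding density_mats_def psd_mat_def by blast
  have sdp_iff: "?sdp \<Omega> u \<longleftrightarrow> \<Omega> \<in> density_mats m \<and> u \<le> sec_value_B m G \<rho>B \<and>
      (\<forall>\<sigma>\<in>density_mats n. payoff G \<Omega> \<sigma> \<le> u)" if "\<rho>B \<in> density_mats n" for \<Omega> u
    using loewner_ptrace_B_iff[OF assms(1,3) herm[OF that]] loewner_ptrace_A_iff[OF assms(3) herm] by blast
  show ?thesis
  proof (cases "\<rho>B \<in> density_mats n")
    case \<rho>B: True
    have "\<rho>B \<in> Phi_B m n G" if "?sdp \<Omega> u" for \<Omega> u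
    proof -
      have "sec_value_B m G \<sigma> \<le> sec_value_B m G \<rho>B" if "\<sigma> \<in> density_mats n" for \<sigma>
        using sdp_iff[OF \<rho>B] \<open>?sdp \<Omega> u\<close> sec_value_B_le_payoff[OF density_mats_carrier[OF that] G] that
        by (meson order_trans)
      then show ?thesis unfolding Phi_B_def using \<rho>B by blast
    qed
    moreover have "\<exists>\<Omega> u. ?sdp \<Omega> u" if opt: "\<rho>B \<in> Phi_B m n G"
    proof -
      obtain \<Omega> where "\<Omega> \<in> density_mats m" "\<forall>\<sigma>\<in>density_mats n. payoff G \<Omega> \<sigma> \<le> sec_value_B m G \<rho>B"
        using minimax_density[OF assms] opt unfolding Phi_B_def by blast
      then show ?thesis using sdp_iff[OF \<rho>B] by blast
    qed
    ultimately show ?thesis using \<rho>B by blast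
  qed (simp add: Phi_B_def)
qed

lemma bilevel_feasible_iff_sdp_feasible:
  assumes "m \<ge> 1" "n \<ge> 1" "hermitian_mat (m * n) H"
  shows "bilevel_feasible m n H \<Delta> \<rho>A D \<rho>B \<longleftrightarrow> (\<exists>\<Omega> u. sdp_feasible m n H \<Delta> \<rho>A D \<rho>B \<Omega> u)"
proof (cases "D \<in> deception_set (m * n) \<Delta>")
  case True
  then have "hermitian_mat (m * n) (H + D)"
    using assms(3) by (simp add: deception_set_def hermitian_mat_add)
  from Phi_B_iff_sdp_constraints[OF assms(1,2) this] True show ?thesis
    unfolding bilevel_feasible_def sdp_feasible_def density_mats_def deception_set_def by blast
qed (auto simp: bilevel_feasible_def sdp_feasible_def deception_set_def)

theorem theorem2:
  fixes nA nB :: nat and H :: "complex mat" and \<Delta> :: real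
    and \<rho>A D \<rho>B \<Omega> :: "complex mat" and u :: real
  assumes "nA \<ge> 1" and "nB \<ge> 1"
    and "hermitian_mat (nA * nB) H"
    and "\<Delta> \<ge> 0"
    and "sdp_optimal nA nB H \<Delta> \<rho>A D \<rho>B \<Omega> u"
  shows "bilevel_optimal nA nB H \<Delta> \<rho>A D \<rho>B"
proof -
  note feasible_iff = bilevel_feasible_iff_sdp_feasible[OF assms(1-3)]
  have "bilevel_feasible nA nB H \<Delta> \<rho>A D \<rho>B"
    using assms(5) feasible_iff unfolding sdp_optimal_def by blast
  moreover have "payoff H \<rho>A \<rho>B \<le> payoff H \<rho>A' \<rho>B'"
    if "bilevel_feasible nA nB H \<Delta> \<rho>A' D' \<rho>B'" for \<rho>A' D' \<rho>B'
    using that assms(5) feasible_iff unfolding sdp_optimal_def by blast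
  ultimately show ?thesis unfolding bilevel_optimal_def by blast
qed

end
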